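(* Let $n,m,l$ be positive integers, $f:\mathbb{R}^n\times\mathbb{R}^m\to\mathbb{R}^n$, $g:\mathbb{R}^n\times\mathbb{R}^m\to\mathbb{R}^{n\times l}$ smooth with $f(0,0)=0$, $g(0,0)=0$, and consider $\dot x=f(x,u)+g(x,u)\theta$ with constant unknown $\theta\in\mathbb{R}^l$. Let $k:\mathbb{R}^l\times\mathbb{R}^n\to\mathbb{R}^m$ be smooth with $k(\vartheta,0)=0$, and $V_\vartheta,Q_\vartheta:\mathbb{R}^n\to\mathbb{R}_+$ continuous, positive definite, radially unbounded, with $(\vartheta,x)\mapsto V_\vartheta(x),Q_\vartheta(x)$ continuous, such that: (H1) for each $\vartheta$, the origin is globally asymptotically stable for $\dot x=f(x,k(\vartheta,x))+g(x,k(\vartheta,x))\vartheta$ and every solution satisfies $V_\vartheta(x(t))\le Q_\vartheta(x(0))$ for $t\ge0$; (H2) for every nonempty compact $\Theta\subset\mathbb{R}^l$ and $M\ge0$ there is $R>0$ with $V_\vartheta(x)\le M,\ \vartheta\in\Theta\Rightarrow|x|\le R$; (H3) there is a positive integer $N$ such that: if there exist $0=\tau_0<\dots<\tau_N$, $\theta,d_0,\dots,d_N\in\mathbb{R}^l$ with all $d_i\ne0$, and a right differentiable $x\in C^0([0,\tau_N];\mathbb{R}^n)\cap C^1([0,\tau_N]\setminus\{\tau_0,\dots,\tau_N\};\mathbb{R}^n)$ with $\dot x(t)=f(x(t),k(\theta+d_i,x(t)))+g(x(t),k(\theta+d_i,x(t)))\theta$ on $[\tau_i,\tau_{i+1})$,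 $i=0,\dots,N-1$, and $g(x(t),k(\theta+d_j,x(t)))d_{i+1}=0$ for $t\in[\tau_j,\tau_{j+1}]$, $i=0,\dots,N-1$, $j=0,\dots,i$, then $x\equiv0$ on $[0,\tau_N]$. Suppose moreover that for each $\vartheta\in\mathbb{R}^l$ there are constants $M_\vartheta,\omega_\vartheta,R_\vartheta>0$ such that every solution of $\dot x=f(x,k(\vartheta,x))+g(x,k(\vartheta,x))\vartheta$ with $|x(0)|\le R_\vartheta$ satisfies $|x(t)|\le M_\vartheta e^{-\omega_\vartheta t}|x(0)|$ for all $t\ge0$, and that for every nonempty compact $\Theta\subset\mathbb{R}^l$ there exist $R>0$, $K_2>K_1>0$ with $K_1|x|^2\le V_\vartheta(x)\le Q_\vartheta(x)\le K_2|x|^2$ for all $\vartheta\in\Theta$ and $|x|\le R$. Let $T>0$, let $a:\mathbb{R}^n\to\mathbb{R}_+$ be continuous, positive definite with $\sup\{|x|^{-2}a(x):x\ne0,|x|\le\delta\}<+\infty$ for some $\delta>0$, and let $\tilde N>N$ be an integer. Then there exist constants $\tilde M_{\theta,\hat\theta},\tilde R_{\theta,\hat\theta}>0$, $(\theta,\hat\theta)\in\mathbb{R}^l\times\mathbb{R}^l$, such that for every $\theta,\hat\theta_0\in\mathbb{R}^l$ and $x_0\in\mathbb{R}^n$ with $|x_0|\le\tilde R_{\theta,\hat\theta_0}$, the solution of the hybrid closed-loop system (see context) with $x(0)=x_0$, $\hat\theta(0)=\hat\theta_0$ satisfies $|x(t)|\le\tilde M_{\theta,\hat\theta_0}e^{-\omega_\theta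 t}|x_0|$ for all $t\ge0$.
   Context: Hybrid closed-loop system: event times $\tau_0=0$, $\tau_{i+1}=\min(\tau_i+T,r_i)$. On $[\tau_i,\tau_{i+1})$: $u(t)=k(\hat\theta(\tau_i),x(t))$, $\hat\theta(t)=\hat\theta(\tau_i)$, $x$ continuous solving $\dot x=f(x,u)+g(x,u)\theta$. Trigger: for $x(\tau_i)\ne0$, $r_i=\inf\{t>\tau_i:V_{\hat\theta(\tau_i)}(x(t))=Q_{\hat\theta(\tau_i)}(x(\tau_i))+a(x(\tau_i))\}$ ($\inf\emptyset=+\infty$); for $x(\tau_i)=0$, $r_i=\tau_i+T$. With $p(t,\sigma)=x(t)-x(\sigma)-\int_\sigma^tf(x(s),u(s))ds$, $q(t,\sigma)=\int_\sigma^tg(x(s),u(s))ds$, $\mu_{i+1}=\min\{\tau_j:j\in\{0,\dots,i\},\tau_j\ge\tau_{i+1}-\tilde NT\}$, $G=\iint_{[\mu_{i+1},\tau_{i+1}]^2}q'(t,\sigma)q(t,\sigma)d\sigma dt$, $Z=\iint_{[\mu_{i+1},\tau_{i+1}]^2}q'(t,\sigma)p(t,\sigma)d\sigma dt$, the update is $\hat\theta(\tau_{i+1})=\arg\min\{|\vartheta-\hat\theta(\tau_i)|^2:\vartheta\in\mathbb{R}^l,\ Z=G\vartheta\}$. Positive definite: $V(0)=0$, $V(x)>0$ for $x\ne0$; radially unbounded: sublevel sets compact. *)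

theory Defs
  imports "HOL-Analysis.Analysis"
begin

text \<open>C-infinity: continuous partial derivatives of every order exist
  (D js is the iterated partial derivative along the basis directions in js).\<close>
definition smooth_fun :: "('a::euclidean_space \<Rightarrow> 'b::real_normed_vector) \<Rightarrow> bool" where
  "smooth_fun h \<longleftrightarrow> (\<exists>D :: 'a list \<Rightarrow> 'a \<Rightarrow> 'b. D [] = h \<and>
     (\<forall>js. set js \<subseteq> Basis \<longrightarrow> continuous_on UNIV (D js) \<and>
        (\<forall>j\<in>Basis. \<forall>y. ((\<lambda>s. D js (y + s *\<^sub>R j)) has_vector_derivative D (j # js) y) (at 0))))"

definition pos_def :: "('a::real_normed_vector \<Rightarrow> real) \<Rightarrow> bool" where
  "pos_def V \<longleftrightarrow> V 0 = 0 \<and> (\<forall>x. x \<noteq> 0 \<longrightarrow> V x > 0)"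

definition radially_unbounded :: "('a::real_normed_vector \<Rightarrow> real) \<Rightarrow> bool" where
  "radially_unbounded V \<longleftrightarrow> (\<forall>c. compact {x. V x \<le> c})"

definition ode_sol :: "('a::real_normed_vector \<Rightarrow> 'a) \<Rightarrow> (real \<Rightarrow> 'a) \<Rightarrow> bool" where
  "ode_sol F x \<longleftrightarrow> (\<forall>t\<ge>0. (x has_vector_derivative F (x t)) (at t within {0..}))"

definition GAS :: "('a::real_normed_vector \<Rightarrow> 'a) \<Rightarrow> bool" where
  "GAS F \<longleftrightarrow> (\<forall>x0. \<exists>x. ode_sol F x \<and> x 0 = x0) \<and>
     (\<forall>\<epsilon>>0. \<exists>\<delta>>0. \<forall>x. ode_sol F x \<and> norm (x 0) < \<delta> \<longrightarrow> (\<forall>t\<ge>0. norm (x t) < \<epsilon>)) \<and>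
     (\<forall>x. ode_sol F x \<longrightarrow> (x \<longlongrightarrow> 0) at_top)"

definition oint :: "real \<Rightarrow> real \<Rightarrow> (real \<Rightarrow> 'b::real_normed_vector) \<Rightarrow> 'b" where
  "oint a b h = (if a \<le> b then integral {a..b} h else - integral {b..a} h)"

definition hybrid_sol ::
  "(real^'n \<Rightarrow> real^'m \<Rightarrow> real^'n) \<Rightarrow> (real^'n \<Rightarrow> real^'m \<Rightarrow> real^'l^'n) \<Rightarrow>
   (real^'l \<Rightarrow> real^'n \<Rightarrow> real^'m) \<Rightarrow> (real^'l \<Rightarrow> real^'n \<Rightarrow> real) \<Rightarrow>
   (real^'l \<Rightarrow> real^'n \<Rightarrow> real) \<Rightarrow> (real^'n \<Rightarrow> real) \<Rightarrow> real \<Rightarrow> nat \<Rightarrow>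
   real^'l \<Rightarrow> real^'n \<Rightarrow> real^'l \<Rightarrow>
   (real \<Rightarrow> real^'n) \<Rightarrow> (real \<Rightarrow> real^'l) \<Rightarrow> (nat \<Rightarrow> real) \<Rightarrow> bool" where
  "hybrid_sol f g k V Q a T Nt \<theta> x0 \<theta>h0 x \<theta>h \<tau> \<longleftrightarrow>
     \<tau> 0 = 0 \<and> (\<forall>t. \<exists>i. t < \<tau> i) \<and>
     x 0 = x0 \<and> \<theta>h 0 = \<theta>h0 \<and> continuous_on {0..} x \<and>
     (\<forall>i. \<tau> i < \<tau> (Suc i)) \<and>
     (\<forall>i. ereal (\<tau> (Suc i)) = min (ereal (\<tau> i + T))
          (if x (\<tau> i) = 0 then ereal (\<tau> i + T)
           else Inf (ereal ` {t. t > \<tau> i \<and> V (\<theta>h (\<tau> i)) (x t) = Q (\<theta>h (\<tau> i)) (x (\<tau> i)) + a (x (\<tau> i))}))) \<and>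
     (\<forall>i. \<forall>t\<in>{\<tau> i..<\<tau> (Suc i)}. \<theta>h t = \<theta>h (\<tau> i) \<and>
          (x has_vector_derivative
             (f (x t) (k (\<theta>h (\<tau> i)) (x t)) + g (x t) (k (\<theta>h (\<tau> i)) (x t)) *v \<theta>))
             (at t within {\<tau> i..<\<tau> (Suc i)})) \<and>
     (\<forall>i. let u = (\<lambda>s. k (\<theta>h s) (x s));
            p = (\<lambda>t \<sigma>. x t - x \<sigma> - oint \<sigma> t (\<lambda>s. f (x s) (u s)));
            q = (\<lambda>t \<sigma>. oint \<sigma> t (\<lambda>s. g (x s) (u s)));
            \<mu> = Min {\<tau> j | j. j \<le> i \<and> \<tau> j \<ge> \<tau> (Suc i) - real Nt * T};
            G = integral ({\<mu>..\<tau> (Suc i)} \<times> {\<mu>..\<tau> (Suc i)})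
                  (\<lambda>(t, \<sigma>). transpose (q t \<sigma>) ** q t \<sigma>);
            Z = integral ({\<mu>..\<tau> (Suc i)} \<times> {\<mu>..\<tau> (Suc i)})
                  (\<lambda>(t, \<sigma>). transpose (q t \<sigma>) *v p t \<sigma>)
        in is_arg_min (\<lambda>\<phi>. (norm (\<phi> - \<theta>h (\<tau> i)))\<^sup>2) (\<lambda>\<phi>. Z = G *v \<phi>) (\<theta>h (\<tau> (Suc i))))"

end

theory Submission
  imports Defs
begin

text \<open>Between two events the estimate is frozen, and the triggering rule caps V at Q + a, which by
  the quadratic bounds on V, Q and a lets |x| grow by at most a fixed factor c per interval. During
  the first Nt T time units the least-squares window starts at 0, so each update makes the regressor
  along the whole past annihilate the new estimation error; unless the estimate is already exact,
  hypothesis (H3) then forces x = 0. Hence the true parameter is reached after at most N events,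
  i.e. before time N T, with |x| at most c^N |x0|, and the estimate then stays there, so the state
  decays exponentially by the local exponential stability of the nominal closed loop.\<close>

lemma bounded_linear_matrix_vector_mult: "bounded_linear (\<lambda>A::real^'l^'n. A *v v)"
  unfolding linear_conv_bounded_linear[symmetric]
  by (rule linearI) (auto simp: matrix_vector_mult_def vec_eq_iff sum.distrib sum_distrib_left algebra_simps)

lemma matrix_vector_mult_uminus_left: "(- A) *v v = - (A *v v)" for A :: "real^'l^'n"
  by (simp add: matrix_vector_mult_def vec_eq_iff sum_negf)

section \<open>Smooth maps are locally Lipschitz\<close>

lemma smooth_fun_continuous: "smooth_fun h \<Longrightarrow> continuous_on UNIV h"
  unfolding smooth_fun_def by (metis empty_subsetI list.set(1))

lemma smooth_fun_partial_derivatives: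
  fixes h :: "'a::euclidean_space \<Rightarrow> 'b::real_normed_vector"
  assumes "smooth_fun h"
  obtains D where "\<And>j. j \<in> Basis \<Longrightarrow> continuous_on UNIV (D j)"
    and "\<And>j y s. j \<in> Basis \<Longrightarrow> ((\<lambda>s. h (y + s *\<^sub>R j)) has_vector_derivative D j (y + s *\<^sub>R j)) (at s)"
proof -
  obtain D :: "'a list \<Rightarrow> 'a \<Rightarrow> 'b" where D0: "D [] = h" and
    D: "\<And>js. set js \<subseteq> Basis \<Longrightarrow> continuous_on UNIV (D js) \<and>
        (\<forall>j\<in>Basis. \<forall>y. ((\<lambda>s. D js (y + s *\<^sub>R j)) has_vector_derivative D (j # js) y) (at 0))"
    using assms unfolding smooth_fun_def by metis
  have "((\<lambda>s. h (y + s *\<^sub>R j)) has_vector_derivative D [j] (y + s0 *\<^sub>R j)) (at s0)"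
    if j: "j \<in> Basis" for y j s0
  proof -
    have "((\<lambda>s. h ((y + s0 *\<^sub>R j) + s *\<^sub>R j)) has_vector_derivative D [j] (y + s0 *\<^sub>R j)) (at ((\<lambda>s. s - s0) s0))"
      using D[of "[]"] j D0 by auto
    moreover have "((\<lambda>s. s - s0) has_vector_derivative 1) (at s0)"
      by (auto intro!: derivative_eq_intros)
    ultimately have "(((\<lambda>s. h ((y + s0 *\<^sub>R j) + s *\<^sub>R j)) \<circ> (\<lambda>s. s - s0))
        has_vector_derivative (1::real) *\<^sub>R D [j] (y + s0 *\<^sub>R j)) (at s0)"
      by (rule vector_diff_chain_at[rotated])
    then show ?thesis by (simp add: o_def algebra_simps)
  qed
  moreover have "continuous_on UNIV (D [j])" if "j \<in> Basis" for j
    using D[of "[j]"] that by simp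
  ultimately show ?thesis using that[of "\<lambda>j. D [j]"] by blast
qed

lemma norm_increment_le_if_vector_derivative_bounded:
  fixes x :: "real \<Rightarrow> 'a::real_normed_vector"
  assumes S: "convex S" and x': "\<And>r. r \<in> S \<Longrightarrow> (x has_vector_derivative x' r) (at r within S)"
    and B: "\<And>r. r \<in> S \<Longrightarrow> norm (x' r) \<le> B" and "s \<in> S" "t \<in> S"
  shows "norm (x t - x s) \<le> B * \<bar>t - s\<bar>"
proof -
  have "norm (x t - x s) \<le> B * norm (t - s)"
  proof (rule differentiable_bound[OF S, where f'="\<lambda>r h. h *\<^sub>R x' r"])
    show "(x has_derivative (\<lambda>h. h *\<^sub>R x' r)) (at r within S)" if "r \<in> S" for r
      using x'[OF that] unfolding has_vector_derivative_def .
    show "onorm (\<lambda>h. h *\<^sub>R x' r) \<le> B" if "r \<in> S" for r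
      using B[OF that] onorm_scaleR_left[OF bounded_linear_ident, of "x' r"] by (simp add: onorm_id)
  qed (use assms in auto)
  then show ?thesis by simp
qed

lemma norm_increment_along_direction:
  fixes h :: "'a::real_normed_vector \<Rightarrow> 'b::real_normed_vector"
  assumes "\<And>s. ((\<lambda>s. h (y + s *\<^sub>R b)) has_vector_derivative D (y + s *\<^sub>R b)) (at s)"
    and "\<And>s. s \<in> closed_segment 0 c \<Longrightarrow> norm (D (y + s *\<^sub>R b)) \<le> B"
  shows "norm (h (y + c *\<^sub>R b) - h y) \<le> B * \<bar>c\<bar>"
proof -
  have "norm (h (y + c *\<^sub>R b) - h (y + 0 *\<^sub>R b)) \<le> B * \<bar>c - 0\<bar>"
  proof (rule norm_increment_le_if_vector_derivative_bounded[where S="closed_segment 0 c"])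
    show "((\<lambda>s. h (y + s *\<^sub>R b)) has_vector_derivative D (y + r *\<^sub>R b)) (at r within closed_segment 0 c)" for r
      using assms(1) by (rule has_vector_derivative_at_within)
  qed (use assms(2) in auto)
  then show ?thesis by simp
qed

lemma norm_sum_coordinates_le:
  fixes v :: "'a::euclidean_space"
  assumes "S \<subseteq> Basis"
  shows "norm (\<Sum>b\<in>S. (v \<bullet> b) *\<^sub>R b) \<le> real (card S) * norm v"
proof -
  have "norm (\<Sum>b\<in>S. (v \<bullet> b) *\<^sub>R b) \<le> (\<Sum>b\<in>S. norm ((v \<bullet> b) *\<^sub>R b))"
    by (rule norm_sum)
  also have "\<dots> \<le> (\<Sum>b\<in>S. norm v)"
    using assms by (intro sum_mono) (auto simp: Basis_le_norm)
  finally show ?thesis by simp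
qed

lemma norm_increment_along_coordinates:
  fixes h :: "'a::euclidean_space \<Rightarrow> 'b::real_normed_vector"
  assumes Dh: "\<And>j y s. j \<in> Basis \<Longrightarrow> ((\<lambda>s. h (y + s *\<^sub>R j)) has_vector_derivative D j (y + s *\<^sub>R j)) (at s)"
    and DB: "\<And>j w. j \<in> Basis \<Longrightarrow> w \<in> cball p 1 \<Longrightarrow> norm (D j w) \<le> B"
    and B: "0 \<le> B" and z: "real DIM('a) * norm (z - p) \<le> 1" and S: "S \<subseteq> Basis"
  shows "norm (h (p + (\<Sum>b\<in>S. ((z - p) \<bullet> b) *\<^sub>R b)) - h p) \<le> real (card S) * B * norm (z - p)"
proof -
  have "finite S" using S finite_Basis finite_subset by blast
  then show ?thesis using S
  proof (induction S)
    case (insert b S)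
    define y where "y = p + (\<Sum>b\<in>S. ((z - p) \<bullet> b) *\<^sub>R b)"
    define c where "c = (z - p) \<bullet> b"
    have b: "b \<in> Basis" using insert by auto
    have c: "\<bar>c\<bar> \<le> norm (z - p)" unfolding c_def using Basis_le_norm[OF b] by auto
    have "y + s *\<^sub>R b \<in> cball p 1" if "s \<in> closed_segment 0 c" for s
    proof -
      have "\<bar>s\<bar> \<le> \<bar>c\<bar>" using that by (auto simp: closed_segment_eq_real_ivl split: if_splits)
      have "norm (y + s *\<^sub>R b - p) \<le> norm (y - p) + norm (s *\<^sub>R b)"
        using norm_triangle_ineq[of "y - p" "s *\<^sub>R b"] by (simp add: algebra_simps)
      also have "\<dots> \<le> real (card S) * norm (z - p) + norm (z - p)"
        using norm_sum_coordinates_le[of S "z - p"] insert.prems \<open>\<bar>s\<bar> \<le> \<bar>c\<bar>\<close> c b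
        by (intro add_mono) (auto simp: y_def)
      also have "\<dots> = real (card (insert b S)) * norm (z - p)"
        using insert by (simp add: algebra_simps)
      also have "\<dots> \<le> 1"
        using card_mono[OF finite_Basis insert(4)] z by (meson mult_right_mono norm_ge_zero of_nat_mono order_trans)
      finally show ?thesis by (simp add: dist_norm norm_minus_commute)
    qed
    then have "norm (h (y + c *\<^sub>R b) - h y) \<le> B * \<bar>c\<bar>"
      by (intro norm_increment_along_direction[OF Dh[OF b]] DB[OF b])
    moreover have "p + (\<Sum>b\<in>insert b S. ((z - p) \<bullet> b) *\<^sub>R b) = y + c *\<^sub>R b"
      using insert by (simp add: y_def c_def algebra_simps)
    ultimately have "norm (h (p + (\<Sum>b\<in>insert b S. ((z - p) \<bullet> b) *\<^sub>R b)) - h p)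
        \<le> norm (h (y + c *\<^sub>R b) - h y) + norm (h y - h p)"
      using norm_triangle_ineq[of "h (y + c *\<^sub>R b) - h y" "h y - h p"] by simp
    also have "\<dots> \<le> B * norm (z - p) + real (card S) * B * norm (z - p)"
      using \<open>norm (h (y + c *\<^sub>R b) - h y) \<le> B * \<bar>c\<bar>\<close> mult_left_mono[OF c B] insert
      unfolding y_def by (intro add_mono) auto
    finally show ?case using insert by (simp add: algebra_simps)
  qed simp
qed

lemma locally_lipschitz_at_if_continuous_partials:
  fixes h :: "'a::euclidean_space \<Rightarrow> 'b::real_normed_vector"
  assumes Dc: "\<And>j. j \<in> Basis \<Longrightarrow> continuous_on UNIV (D j)"
    and Dh: "\<And>j y s. j \<in> Basis \<Longrightarrow> ((\<lambda>s. h (y + s *\<^sub>R j)) has_vector_derivative D j (y + s *\<^sub>R j)) (at s)"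
  shows "\<exists>L>0. \<exists>\<rho>>0. \<forall>z. norm (z - z0) \<le> \<rho> \<longrightarrow> norm (h z - h z0) \<le> L * norm (z - z0)"
proof -
  have "continuous_on UNIV (\<lambda>w. \<Sum>j\<in>Basis. norm (D j w))"
    using Dc by (auto intro!: continuous_on_sum continuous_on_norm)
  then have "bounded ((\<lambda>w. \<Sum>j\<in>Basis. norm (D j w)) ` cball z0 1)"
    by (intro compact_imp_bounded compact_continuous_image compact_cball) (rule continuous_on_subset, auto)
  then obtain B where "\<forall>y\<in>(\<lambda>w. \<Sum>j\<in>Basis. norm (D j w)) ` cball z0 1. norm y \<le> B"
    by (auto simp: bounded_iff)
  then have B: "(\<Sum>j\<in>Basis. norm (D j w)) \<le> B" if "w \<in> cball z0 1" for w
    using that abs_le_D1 unfolding real_norm_def by blast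
  have DB: "norm (D j w) \<le> B" if "j \<in> Basis" "w \<in> cball z0 1" for j w
    using member_le_sum[of j Basis "\<lambda>j. norm (D j w)"] B[OF that(2)] that(1) by simp
  have B0: "B \<ge> 0"
    using B[of z0] sum_nonneg[of Basis "\<lambda>j. norm (D j z0)"] by simp
  have "norm (h z - h z0) \<le> (real DIM('a) * B + 1) * norm (z - z0)"
    if "norm (z - z0) \<le> 1 / real DIM('a)" for z
  proof -
    have "z0 + (\<Sum>b\<in>Basis. ((z - z0) \<bullet> b) *\<^sub>R b) = z"
      using euclidean_representation[of "z - z0"] by simp
    then have "norm (h z - h z0) \<le> real DIM('a) * B * norm (z - z0)"
      using norm_increment_along_coordinates[where z=z and p=z0 and S=Basis, OF Dh DB B0] that
      by (simp add: field_simps)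
    also have "\<dots> \<le> (real DIM('a) * B + 1) * norm (z - z0)"
      by (intro mult_right_mono) auto
    finally show ?thesis .
  qed
  moreover have "real DIM('a) * B + 1 > 0" "1 / real DIM('a) > 0"
    using B0 by (auto simp: add_nonneg_pos)
  ultimately show ?thesis by blast
qed

lemma smooth_fun_locally_lipschitz_at:
  fixes h :: "'a::euclidean_space \<Rightarrow> 'b::real_normed_vector"
  assumes "smooth_fun h"
  shows "\<exists>L>0. \<exists>\<rho>>0. \<forall>z. norm (z - z0) \<le> \<rho> \<longrightarrow> norm (h z - h z0) \<le> L * norm (z - z0)"
proof -
  obtain D where "\<And>j. j \<in> Basis \<Longrightarrow> continuous_on UNIV (D j)"
    and "\<And>j y s. j \<in> Basis \<Longrightarrow> ((\<lambda>s. h (y + s *\<^sub>R j)) has_vector_derivative D j (y + s *\<^sub>R j)) (at s)"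
    using smooth_fun_partial_derivatives[OF assms] by blast
  then show ?thesis by (rule locally_lipschitz_at_if_continuous_partials)
qed

lemma closed_loop_field_linear_bound:
  fixes f :: "real^'n \<Rightarrow> real^'m \<Rightarrow> real^'n"
    and g :: "real^'n \<Rightarrow> real^'m \<Rightarrow> real^'l^'n"
    and k :: "real^'l \<Rightarrow> real^'n \<Rightarrow> real^'m"
  assumes f: "smooth_fun (\<lambda>(x, u). f x u)" and g: "smooth_fun (\<lambda>(x, u). g x u)"
    and k: "smooth_fun (\<lambda>(\<phi>, x). k \<phi> x)"
    and f0: "f 0 0 = 0" and g0: "g 0 0 = 0" and k0: "k \<phi> 0 = 0"
  shows "\<exists>L>0. \<exists>\<rho>>0. \<forall>y. norm y \<le> \<rho> \<longrightarrow> norm (f y (k \<phi> y) + g y (k \<phi> y) *v \<theta>) \<le> L * norm y"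
proof -
  obtain Lf \<rho>f where Lf: "Lf > 0" "\<rho>f > 0"
    and f_lip: "\<And>z. norm (z - (0, 0)) \<le> \<rho>f \<Longrightarrow>
      norm ((\<lambda>(x, u). f x u) z - (\<lambda>(x, u). f x u) (0, 0)) \<le> Lf * norm (z - (0, 0))"
    using smooth_fun_locally_lipschitz_at[OF f] by blast
  obtain Lg \<rho>g where Lg: "Lg > 0" "\<rho>g > 0"
    and g_lip: "\<And>z. norm (z - (0, 0)) \<le> \<rho>g \<Longrightarrow>
      norm ((\<lambda>(x, u). g x u) z - (\<lambda>(x, u). g x u) (0, 0)) \<le> Lg * norm (z - (0, 0))"
    using smooth_fun_locally_lipschitz_at[OF g] by blast
  obtain Lk \<rho>k where Lk: "Lk > 0" "\<rho>k > 0"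
    and k_lip: "\<And>z. norm (z - (\<phi>, 0)) \<le> \<rho>k \<Longrightarrow>
      norm ((\<lambda>(\<phi>, x). k \<phi> x) z - (\<lambda>(\<phi>, x). k \<phi> x) (\<phi>, 0)) \<le> Lk * norm (z - (\<phi>, 0))"
    using smooth_fun_locally_lipschitz_at[OF k] by blast
  obtain K where K: "K > 0" "\<And>A::real^'l^'n. norm (A *v \<theta>) \<le> norm A * K"
    using bounded_linear.pos_bounded[OF bounded_linear_matrix_vector_mult] by blast
  define \<rho> where "\<rho> = min \<rho>k (min (\<rho>f / (1 + Lk)) (\<rho>g / (1 + Lk)))"
  define L where "L = (Lf + K * Lg) * (1 + Lk)"
  have "norm (f y (k \<phi> y) + g y (k \<phi> y) *v \<theta>) \<le> L * norm y" if y: "norm y \<le> \<rho>" for y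
  proof -
    have "norm (k \<phi> y) \<le> Lk * norm y"
      using k_lip[of "(\<phi>, y)"] y k0 by (simp add: \<rho>_def)
    then have yk: "norm (y, k \<phi> y) \<le> (1 + Lk) * norm y"
      using norm_Pair_le[of y "k \<phi> y"] by (simp add: algebra_simps)
    also have "\<dots> \<le> min \<rho>f \<rho>g"
      using y Lk by (simp add: \<rho>_def field_simps)
    finally have "norm (f y (k \<phi> y)) \<le> Lf * norm (y, k \<phi> y)" "norm (g y (k \<phi> y)) \<le> Lg * norm (y, k \<phi> y)"
      using f_lip[of "(y, k \<phi> y)"] g_lip[of "(y, k \<phi> y)"] f0 g0 by auto
    then have nf: "norm (f y (k \<phi> y)) \<le> Lf * ((1 + Lk) * norm y)"
      and ng: "norm (g y (k \<phi> y)) \<le> Lg * ((1 + Lk) * norm y)"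
      using yk Lf Lg by (meson less_imp_le mult_left_mono order_trans)+
    have "norm (f y (k \<phi> y) + g y (k \<phi> y) *v \<theta>) \<le> norm (f y (k \<phi> y)) + norm (g y (k \<phi> y)) * K"
      using norm_triangle_ineq[of "f y (k \<phi> y)" "g y (k \<phi> y) *v \<theta>"] K(2)[of "g y (k \<phi> y)"] by linarith
    also have "\<dots> \<le> Lf * ((1 + Lk) * norm y) + Lg * ((1 + Lk) * norm y) * K"
      using nf ng K(1) by (intro add_mono mult_right_mono) auto
    also have "\<dots> = L * norm y" unfolding L_def by (simp add: algebra_simps)
    finally show ?thesis .
  qed
  moreover have "L > 0" "\<rho> > 0"
    unfolding L_def \<rho>_def using Lf Lg Lk K by (auto intro!: mult_pos_pos add_pos_pos)
  ultimately show ?thesis by blast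
qed

section \<open>Differential inequalities and integrals\<close>

lemma solution_stays_zero_locally:
  fixes x :: "real \<Rightarrow> 'a::real_normed_vector"
  assumes x_cont: "continuous_on {a..b} x"
    and x_deriv: "\<And>t. t \<in> {a..<b} \<Longrightarrow> (x has_vector_derivative F (x t)) (at t within {a..<b})"
    and L: "L > 0" and \<rho>: "\<rho> > 0" and lin: "\<And>y. norm y \<le> \<rho> \<Longrightarrow> norm (F y) \<le> L * norm y"
    and c: "c \<in> {a..<b}" and xc0: "x c = 0"
  shows "\<exists>e>0. c + e \<le> b \<and> (\<forall>s\<in>{c..c+e}. x s = 0)"
proof -
  have "continuous (at c within {a..b}) x"
    using x_cont c unfolding continuous_on_eq_continuous_within by auto
  then obtain \<epsilon> where \<epsilon>: "\<epsilon> > 0" "\<And>s. s \<in> {a..b} \<Longrightarrow> dist s c < \<epsilon> \<Longrightarrow> dist (x s) (x c) < \<rho>"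
    unfolding continuous_within_eps_delta using \<rho> by blast
  define e where "e = min (\<epsilon> / 2) (min (1 / (2 * L)) ((b - c) / 2))"
  have e0: "e > 0" unfolding e_def using \<epsilon> L c by auto
  have "e \<le> (b - c) / 2" unfolding e_def by (intro min.coboundedI2) simp
  then have ceb: "c + e < b" using c by simp
  have "L * e \<le> L * (1 / (2 * L))" unfolding e_def using L by (intro mult_left_mono) auto
  then have eL: "L * e \<le> 1 / 2" using L by simp
  have "e \<le> \<epsilon> / 2" unfolding e_def by simp
  then have small: "norm (x s) \<le> \<rho>" if "s \<in> {c..c+e}" for s
    using \<epsilon> that c ceb xc0 by (auto simp: dist_real_def intro!: less_imp_le)
  have sub: "{c..c+e} \<subseteq> {a..<b}" using c ceb by auto
  have cont: "continuous_on {c..c+e} x"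
    by (rule continuous_on_subset[OF x_cont]) (use c ceb in auto)
  have "{c..c+e} \<noteq> {}" using e0 by simp
  then obtain s0 where s0: "s0 \<in> {c..c+e}" "\<And>s. s \<in> {c..c+e} \<Longrightarrow> norm (x s) \<le> norm (x s0)"
    using continuous_attains_sup[OF compact_Icc _ continuous_on_norm[OF cont]] by blast
  text \<open>On {c..c+e} the speed is at most L * max |x|, so the maximum of |x| is at most half itself.\<close>
  have "norm (x s0 - x c) \<le> (L * norm (x s0)) * \<bar>s0 - c\<bar>"
  proof (rule norm_increment_le_if_vector_derivative_bounded[where x'="\<lambda>r. F (x r)"])
    show "(x has_vector_derivative F (x r)) (at r within {c..c+e})" if "r \<in> {c..c+e}" for r
      using has_vector_derivative_within_subset[OF x_deriv sub] that sub by auto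
    show "norm (F (x r)) \<le> L * norm (x s0)" if r: "r \<in> {c..c+e}" for r
      using lin[OF small[OF r]] mult_left_mono[OF s0(2)[OF r] less_imp_le[OF L]] by linarith
  qed (use s0 e0 in auto)
  also have "\<dots> \<le> (L * norm (x s0)) * e"
    using s0(1) L by (intro mult_left_mono) auto
  also have "\<dots> = norm (x s0) * (L * e)" by simp
  also have "\<dots> \<le> norm (x s0) * (1 / 2)"
    using eL by (intro mult_left_mono) auto
  finally have "norm (x s0) = 0" using xc0 by simp
  then show ?thesis
    using s0(2) e0 ceb by (intro exI[of _ e]) auto
qed

lemma solution_stays_zero:
  fixes x :: "real \<Rightarrow> 'a::real_normed_vector"
  assumes x_cont: "continuous_on {a..b} x"
    and x_deriv: "\<And>t. t \<in> {a..<b} \<Longrightarrow> (x has_vector_derivative F (x t)) (at t within {a..<b})"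
    and lin: "\<exists>L>0. \<exists>\<rho>>0. \<forall>y. norm y \<le> \<rho> \<longrightarrow> norm (F y) \<le> L * norm y"
    and xa0: "x a = 0" and ab: "a \<le> b"
  shows "\<forall>t\<in>{a..b}. x t = 0"
proof -
  define A where "A = {t\<in>{a..b}. \<forall>s\<in>{a..t}. x s = 0}"
  have aA: "a \<in> A" and bdd: "bdd_above A" using xa0 ab by (auto simp: A_def intro: bdd_aboveI[of _ b])
  define c where "c = Sup A"
  have ac: "a \<le> c" unfolding c_def by (rule cSup_upper[OF aA bdd])
  have cb: "c \<le> b" unfolding c_def using aA by (intro cSup_least) (auto simp: A_def)
  have below: "x s = 0" if s: "a \<le> s" "s < c" for s
  proof -
    obtain t where "t \<in> A" "s < t" using less_cSup_iff[of A s] aA bdd s(2) unfolding c_def by auto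
    then show ?thesis using s(1) by (auto simp: A_def)
  qed
  have "x c = 0"
  proof (cases "a = c")
    case False
    have "closed {s \<in> {a..c}. x s = 0}"
      by (rule continuous_closed_preimage_constant) (use continuous_on_subset[OF x_cont] cb in auto)
    moreover have "{a..<c} \<subseteq> {s \<in> {a..c}. x s = 0}" using below by auto
    ultimately have "closure {a..<c} \<subseteq> {s \<in> {a..c}. x s = 0}" using closure_minimal by blast
    then show ?thesis using False ac by auto
  qed (use xa0 in simp)
  then have cA: "c \<in> A" unfolding A_def using ac cb below by (auto simp: le_less)
  have "c = b"
  proof (rule ccontr)
    assume "c \<noteq> b"
    obtain L \<rho> where "L > 0" "\<rho> > 0" "\<And>y. norm y \<le> \<rho> \<Longrightarrow> norm (F y) \<le> L * norm y" using lin by blast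
    moreover have "c \<in> {a..<b}" using \<open>c \<noteq> b\<close> ac cb by auto
    ultimately obtain e where "e > 0" "c + e \<le> b" "\<forall>s\<in>{c..c+e}. x s = 0"
      using solution_stays_zero_locally[OF x_cont x_deriv _ _ _ _ \<open>x c = 0\<close>] by blast
    then have "c + e \<in> A" using cA by (auto simp: A_def)
    then have "c + e \<le> c" unfolding c_def by (rule cSup_upper[OF _ bdd])
    with \<open>e > 0\<close> show False by simp
  qed
  then show ?thesis using cA unfolding A_def by auto
qed

lemma ode_sol_shift:
  assumes "\<And>t. t0 \<le> t \<Longrightarrow> (x has_vector_derivative F (x t)) (at t within {t0..})"
  shows "ode_sol F (\<lambda>t. x (t0 + t))"
  unfolding ode_sol_def
proof (intro allI impI)
  fix t :: real assume "0 \<le> t"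
  have "((\<lambda>s. t0 + s) has_vector_derivative 1) (at t within {0..})"
    by (auto intro!: derivative_eq_intros)
  moreover have "(x has_vector_derivative F (x (t0 + t))) (at (t0 + t) within (\<lambda>s. t0 + s) ` {0..})"
    using assms[of "t0 + t"] \<open>0 \<le> t\<close> by (simp add: image_add_atLeast)
  ultimately have "((x \<circ> (\<lambda>s. t0 + s)) has_vector_derivative (1::real) *\<^sub>R F (x (t0 + t))) (at t within {0..})"
    by (rule vector_diff_chain_within)
  then show "((\<lambda>t. x (t0 + t)) has_vector_derivative F (x (t0 + t))) (at t within {0..})"
    by (simp add: o_def)
qed

lemma norm_stays_below_if_energy_bounded:
  fixes x :: "real \<Rightarrow> 'a::real_normed_vector"
  assumes x_cont: "continuous_on {a..t} x" and at: "a \<le> t"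
    and W: "\<And>y. norm y \<le> Rb \<Longrightarrow> K1 * (norm y)\<^sup>2 \<le> W y"
    and xa: "norm (x a) < Rb"
    and bnd: "\<And>s. s \<in> {a..t} \<Longrightarrow> W (x s) \<le> C"
    and C: "C < K1 * Rb\<^sup>2"
  shows "norm (x t) < Rb"
proof (rule ccontr)
  assume "\<not> norm (x t) < Rb"
  then obtain s where s: "a \<le> s" "s \<le> t" "norm (x s) = Rb"
    using IVT'[of "\<lambda>s. norm (x s)" a Rb t, OF less_imp_le[OF xa] _ at continuous_on_norm[OF x_cont]]
    by (auto simp: not_less)
  have "K1 * Rb\<^sup>2 \<le> W (x s)" using W[of "x s"] s by simp
  also have "\<dots> \<le> C" using bnd[of s] s by auto
  finally show False using C by simp
qed

lemma continuous_on_gram: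
  fixes q :: "'a::topological_space \<Rightarrow> real^'l^'n"
  assumes "continuous_on S q"
  shows "continuous_on S (\<lambda>z. transpose (q z) ** q z)"
proof -
  have "continuous_on UNIV (\<lambda>A::real^'l^'n. transpose A ** A)"
    unfolding matrix_matrix_mult_def transpose_def by (intro continuous_intros)
  from continuous_on_compose2[OF this assms] show ?thesis by simp
qed

lemma gram_integral_annihilates_imp_annihilates:
  fixes q :: "'a::euclidean_space \<Rightarrow> real^'l^'n"
  assumes q_cont: "continuous_on (cbox a b) q" and ne: "box a b \<noteq> {}"
    and zero: "integral (cbox a b) (\<lambda>z. transpose (q z) ** q z) *v d = 0"
    and z: "z \<in> cbox a b"
  shows "q z *v d = 0"
proof -
  have gram_quadratic_form: "d \<bullet> ((transpose A ** A) *v d) = (norm (A *v d))\<^sup>2" for A :: "real^'l^'n"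
    by (simp add: power2_norm_eq_inner matrix_vector_mul_assoc[symmetric])
       (metis dot_lmul_matrix inner_commute)
  have sq_cont: "continuous_on (cbox a b) (\<lambda>z. (norm (q z *v d))\<^sup>2)"
    by (intro continuous_intros continuous_on_compose2[OF linear_continuous_on[OF bounded_linear_matrix_vector_mult] q_cont]) auto
  have "integral (cbox a b) (\<lambda>z. (norm (q z *v d))\<^sup>2)
      = integral (cbox a b) ((\<lambda>A. d \<bullet> (A *v d)) \<circ> (\<lambda>z. transpose (q z) ** q z))"
    by (simp add: o_def gram_quadratic_form)
  also have "\<dots> = d \<bullet> (integral (cbox a b) (\<lambda>z. transpose (q z) ** q z) *v d)"
    by (rule integral_linear[OF integrable_continuous[OF continuous_on_gram[OF q_cont]]
        bounded_linear_compose[OF bounded_linear_inner_right bounded_linear_matrix_vector_mult]])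
  also have "\<dots> = 0" using zero by simp
  finally have "((\<lambda>z. (norm (q z *v d))\<^sup>2) has_integral 0) (cbox a b)"
    using integrable_integral[OF integrable_continuous[OF sq_cont]] by simp
  then have "(norm (q z *v d))\<^sup>2 = 0"
    using has_integral_0_cbox_imp_0[OF sq_cont _ _ ne z] by simp
  then show ?thesis by simp
qed

lemma indefinite_integral_zero_imp_zero:
  fixes G :: "real \<Rightarrow> 'a::banach"
  assumes G_cont: "continuous_on {a..b} G" and ab: "a < b"
    and zero: "\<And>s. s \<in> {a..b} \<Longrightarrow> integral {a..s} G = 0"
    and t: "t \<in> {a..b}"
  shows "G t = 0"
proof -
  have "((\<lambda>u. integral {a..u} G) has_vector_derivative G t) (at t within {a..b})"
    by (rule integral_has_vector_derivative[OF G_cont t])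
  then have "((\<lambda>u. 0) has_vector_derivative G t) (at t within {a..b})"
    by (rule has_vector_derivative_transform[OF t, rotated]) (use zero in simp)
  then show ?thesis
    using vector_derivative_unique_within_closed_interval[of a b t, unfolded cbox_interval]
      ab t has_vector_derivative_const by blast
qed

section \<open>Trajectories of the hybrid closed loop\<close>

locale hybrid_trajectory =
  fixes f :: "real^'n \<Rightarrow> real^'m \<Rightarrow> real^'n" and g :: "real^'n \<Rightarrow> real^'m \<Rightarrow> real^'l^'n"
    and k :: "real^'l \<Rightarrow> real^'n \<Rightarrow> real^'m" and V Q :: "real^'l \<Rightarrow> real^'n \<Rightarrow> real"
    and a :: "real^'n \<Rightarrow> real" and T :: real and Nt :: nat and \<theta> :: "real^'l"
    and x0 :: "real^'n" and \<theta>h0 :: "real^'l"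
    and x :: "real \<Rightarrow> real^'n" and \<theta>h :: "real \<Rightarrow> real^'l" and \<tau> :: "nat \<Rightarrow> real"
  assumes hybrid_sol: "hybrid_sol f g k V Q a T Nt \<theta> x0 \<theta>h0 x \<theta>h \<tau>"
    and f_cont: "continuous_on UNIV (\<lambda>(x, u). f x u)"
    and g_cont: "continuous_on UNIV (\<lambda>(x, u). g x u)"
    and k_cont: "continuous_on UNIV (\<lambda>(\<phi>, x). k \<phi> x)"
    and T_pos: "T > 0" and Nt_pos: "Nt \<ge> 1"
    and linear_bound: "\<And>\<phi>. \<exists>L>0. \<exists>\<rho>>0. \<forall>y. norm y \<le> \<rho> \<longrightarrow> norm (f y (k \<phi> y) + g y (k \<phi> y) *v \<theta>) \<le> L * norm y"
begin

definition closed_loop :: "real^'l \<Rightarrow> real^'n \<Rightarrow> real^'n" where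
  "closed_loop \<phi> y = f y (k \<phi> y) + g y (k \<phi> y) *v \<theta>"

definition f_traj :: "real \<Rightarrow> real^'n" where "f_traj s = f (x s) (k (\<theta>h s) (x s))"
definition g_traj :: "real \<Rightarrow> real^'l^'n" where "g_traj s = g (x s) (k (\<theta>h s) (x s))"

text \<open>window_start i, gram i and moment i are the quantities \<mu>, G and Z of the update that
  produces the estimate at \<tau> (Suc i).\<close>
definition window_start :: "nat \<Rightarrow> real" where
  "window_start i = Min {\<tau> j | j. j \<le> i \<and> \<tau> j \<ge> \<tau> (Suc i) - real Nt * T}"

definition gram :: "nat \<Rightarrow> real^'l^'l" where
  "gram i = integral ({window_start i..\<tau> (Suc i)} \<times> {window_start i..\<tau> (Suc i)})
     (\<lambda>(t, \<sigma>). transpose (oint \<sigma> t g_traj) ** oint \<sigma> t g_traj)"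

definition moment :: "nat \<Rightarrow> real^'l" where
  "moment i = integral ({window_start i..\<tau> (Suc i)} \<times> {window_start i..\<tau> (Suc i)})
     (\<lambda>(t, \<sigma>). transpose (oint \<sigma> t g_traj) *v (x t - x \<sigma> - oint \<sigma> t f_traj))"

lemma event_time_0: "\<tau> 0 = 0"
  and event_times_unbounded: "\<exists>i. t < \<tau> i"
  and x_at_0: "x 0 = x0"
  and theta_hat_at_0: "\<theta>h 0 = \<theta>h0"
  and x_continuous: "continuous_on {0..} x"
  and event_times_increasing: "\<tau> i < \<tau> (Suc i)"
  using hybrid_sol unfolding hybrid_sol_def by blast+

lemma next_event_time:
  "ereal (\<tau> (Suc i)) = min (ereal (\<tau> i + T))
     (if x (\<tau> i) = 0 then ereal (\<tau> i + T)
      else Inf (ereal ` {t. t > \<tau> i \<and> V (\<theta>h (\<tau> i)) (x t) = Q (\<theta>h (\<tau> i)) (x (\<tau> i)) + a (x (\<tau> i))}))"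
  using hybrid_sol unfolding hybrid_sol_def by blast

lemma theta_hat_between_events: "t \<in> {\<tau> i..<\<tau> (Suc i)} \<Longrightarrow> \<theta>h t = \<theta>h (\<tau> i)"
  and x_derivative_between_events: "t \<in> {\<tau> i..<\<tau> (Suc i)} \<Longrightarrow>
    (x has_vector_derivative closed_loop (\<theta>h (\<tau> i)) (x t)) (at t within {\<tau> i..<\<tau> (Suc i)})"
  using hybrid_sol unfolding hybrid_sol_def closed_loop_def by blast+

lemma parameter_update:
  "is_arg_min (\<lambda>\<phi>. (norm (\<phi> - \<theta>h (\<tau> i)))\<^sup>2) (\<lambda>\<phi>. moment i = gram i *v \<phi>) (\<theta>h (\<tau> (Suc i)))"
  using hybrid_sol unfolding hybrid_sol_def Let_def moment_def gram_def window_start_def f_traj_def g_traj_def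
  by blast

lemma strict_mono_event_times: "strict_mono \<tau>"
  using event_times_increasing by (simp add: strict_mono_Suc_iff)

lemma event_time_less_iff: "\<tau> i < \<tau> j \<longleftrightarrow> i < j"
  using strict_mono_event_times by (simp add: strict_mono_less)

lemma event_time_le_iff: "\<tau> i \<le> \<tau> j \<longleftrightarrow> i \<le> j"
  using strict_mono_event_times by (simp add: strict_mono_less_eq)

lemma event_time_nonneg: "\<tau> i \<ge> 0"
  using event_time_le_iff[of 0 i] event_time_0 by simp

lemma event_time_Suc_le: "\<tau> (Suc i) \<le> \<tau> i + T"
proof -
  have "ereal (\<tau> (Suc i)) \<le> ereal (\<tau> i + T)" unfolding next_event_time by (rule min.cobounded1)
  then show ?thesis by simp
qed

lemma event_time_le: "\<tau> i \<le> real i * T"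
proof (induction i)
  case (Suc i)
  then show ?case using event_time_Suc_le[of i] by (simp add: algebra_simps)
qed (simp add: event_time_0)

lemma event_interval_exists:
  assumes "s \<ge> 0"
  obtains i where "\<tau> i \<le> s" "s < \<tau> (Suc i)"
proof -
  define j where "j = (LEAST j. s < \<tau> j)"
  have j: "s < \<tau> j" unfolding j_def using event_times_unbounded by (rule LeastI_ex)
  then have "j \<noteq> 0" using event_time_0 assms by (metis not_le)
  then obtain i where i: "j = Suc i" using not0_implies_Suc by blast
  have "\<not> s < \<tau> i" unfolding j_def by (rule not_less_Least) (use i j_def in simp)
  then show ?thesis using i j by (intro that[of i]) auto
qed

lemma x_continuous_on: "0 \<le> b \<Longrightarrow> continuous_on {b..c} x"
  by (rule continuous_on_subset[OF x_continuous]) auto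

lemma continuous_on_feedback:
  assumes h: "continuous_on UNIV (\<lambda>(x, u). h x u)"
  shows "continuous_on S (\<lambda>y. h y (k \<phi> y))"
proof -
  have "continuous_on S (\<lambda>y. (\<lambda>(\<phi>, x). k \<phi> x) (\<phi>, y))"
    by (rule continuous_on_compose2[OF k_cont]) (auto intro!: continuous_intros)
  then have "continuous_on S (\<lambda>y. (y, k \<phi> y))"
    by (intro continuous_on_Pair continuous_on_id) simp
  then have "continuous_on S (\<lambda>y. (\<lambda>(x, u). h x u) (y, k \<phi> y))"
    by (rule continuous_on_compose2[OF h]) auto
  then show ?thesis by simp
qed

lemma closed_loop_continuous: "continuous_on S (closed_loop \<phi>)"
proof -
  have "continuous_on S (\<lambda>y. g y (k \<phi> y) *v \<theta>)"
    using continuous_on_compose2[OF linear_continuous_on[OF bounded_linear_matrix_vector_mult]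
        continuous_on_feedback[OF g_cont]] by blast
  then show ?thesis
    unfolding closed_loop_def by (intro continuous_on_add continuous_on_feedback[OF f_cont])
qed

lemma integrable_along_trajectory:
  fixes W :: "real^'l \<Rightarrow> real^'n \<Rightarrow> 'b::euclidean_space"
  assumes W_cont: "\<And>\<phi>. continuous_on UNIV (W \<phi>)" and "0 \<le> b"
  shows "(\<lambda>s. W (\<theta>h s) (x s)) integrable_on {b..c}"
proof -
  have piece: "(\<lambda>s. W (\<theta>h s) (x s)) integrable_on {\<tau> j..\<tau> (Suc j)}" for j
  proof (rule integrable_spike_finite[where S="{\<tau> (Suc j)}" and f="\<lambda>s. W (\<theta>h (\<tau> j)) (x s)"])
    have "continuous_on {\<tau> j..\<tau> (Suc j)} (\<lambda>s. W (\<theta>h (\<tau> j)) (x s))"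
      by (rule continuous_on_compose2[OF W_cont x_continuous_on[OF event_time_nonneg]]) simp
    then show "(\<lambda>s. W (\<theta>h (\<tau> j)) (x s)) integrable_on {\<tau> j..\<tau> (Suc j)}"
      by (rule integrable_continuous_real)
    show "W (\<theta>h s) (x s) = W (\<theta>h (\<tau> j)) (x s)" if "s \<in> {\<tau> j..\<tau> (Suc j)} - {\<tau> (Suc j)}" for s
      using theta_hat_between_events[of s j] that by auto
  qed simp
  have up_to_event: "(\<lambda>s. W (\<theta>h s) (x s)) integrable_on {0..\<tau> n}" for n
  proof (induction n)
    case (Suc n)
    show ?case
      by (rule Henstock_Kurzweil_Integration.integrable_combine[OF _ _ Suc piece[of n]])
         (simp_all add: event_time_nonneg less_imp_le[OF event_times_increasing])
  qed (use event_time_0 integrable_on_refl[of _ 0] in simp)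
  obtain J where "c < \<tau> J" using event_times_unbounded by blast
  then have "{b..c} \<subseteq> {0..\<tau> J}" using \<open>0 \<le> b\<close> by auto
  then show ?thesis by (rule integrable_on_subinterval[OF up_to_event])
qed

lemma f_traj_integrable: "0 \<le> b \<Longrightarrow> f_traj integrable_on {b..c}"
  unfolding f_traj_def by (rule integrable_along_trajectory[OF continuous_on_feedback[OF f_cont]])

lemma g_traj_integrable: "0 \<le> b \<Longrightarrow> g_traj integrable_on {b..c}"
  unfolding g_traj_def by (rule integrable_along_trajectory[OF continuous_on_feedback[OF g_cont]])

lemma x_has_derivative_off_events:
  assumes "s \<ge> 0" "s \<notin> range \<tau>"
  shows "(x has_vector_derivative (f_traj s + g_traj s *v \<theta>)) (at s)"
proof -
  obtain i where i: "\<tau> i \<le> s" "s < \<tau> (Suc i)" using event_interval_exists[OF assms(1)] .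
  then have "\<tau> i < s" using assms(2) by (metis le_less rangeI)
  then have "at s within {\<tau> i..<\<tau> (Suc i)} = at s"
    by (intro at_within_open_subset[where S="{\<tau> i<..<\<tau> (Suc i)}"]) (use i in auto)
  then show ?thesis
    using x_derivative_between_events[of s i] theta_hat_between_events[of s i] i
    by (simp add: closed_loop_def f_traj_def g_traj_def)
qed

lemma x_increment_eq_integral:
  assumes "0 \<le> b" "b \<le> c"
  shows "((\<lambda>s. f_traj s + g_traj s *v \<theta>) has_integral (x c - x b)) {b..c}"
proof -
  obtain J where J: "c < \<tau> J" using event_times_unbounded by blast
  have off_events: "s \<notin> range \<tau>" if s: "s \<in> {b<..<c} - \<tau> ` {..<J}" for s
  proof
    assume "s \<in> range \<tau>"
    then obtain i where "s = \<tau> i" by auto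
    moreover have "i < J" using \<open>s = \<tau> i\<close> s J event_time_less_iff[of i J] by auto
    ultimately show False using s by auto
  qed
  show ?thesis
  proof (rule fundamental_theorem_of_calculus_interior_strong[where S="\<tau> ` {..<J}"])
    show "continuous_on {b..c} x" using assms(1) by (rule x_continuous_on)
    show "(x has_vector_derivative f_traj s + g_traj s *v \<theta>) (at s)" if "s \<in> {b<..<c} - \<tau> ` {..<J}" for s
      by (rule x_has_derivative_off_events) (use that assms off_events in auto)
  qed (use assms in auto)
qed

text \<open>The identity behind the estimator: the prediction error p(t, \<sigma>) equals q(t, \<sigma>) \<theta>.\<close>
lemma prediction_error_eq:
  assumes "0 \<le> t" "0 \<le> \<sigma>"
  shows "x t - x \<sigma> - oint \<sigma> t f_traj = oint \<sigma> t g_traj *v \<theta>"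
proof -
  have increment: "x c - x b = integral {b..c} f_traj + integral {b..c} g_traj *v \<theta>"
    if "0 \<le> b" "b \<le> c" for b c
  proof -
    have "x c - x b = integral {b..c} (\<lambda>s. f_traj s + g_traj s *v \<theta>)"
      using integral_unique[OF x_increment_eq_integral[OF that]] by simp
    also have "\<dots> = integral {b..c} f_traj + integral {b..c} (\<lambda>s. g_traj s *v \<theta>)"
      by (rule integral_add[OF f_traj_integrable[OF that(1)]
            integrable_linear[OF g_traj_integrable[OF that(1)] bounded_linear_matrix_vector_mult, unfolded o_def]])
    also have "integral {b..c} (\<lambda>s. g_traj s *v \<theta>) = integral {b..c} g_traj *v \<theta>"
      using integral_linear[OF g_traj_integrable[OF that(1)] bounded_linear_matrix_vector_mult]
      by (simp only: o_def)
    finally show ?thesis .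
  qed
  show ?thesis
  proof (cases "\<sigma> \<le> t")
    case True
    then show ?thesis using increment[OF assms(2) True] by (simp add: oint_def)
  next
    case False
    have "x t - x \<sigma> - oint \<sigma> t f_traj = - (x \<sigma> - x t - integral {t..\<sigma>} f_traj)"
      using False by (simp add: oint_def)
    also have "\<dots> = - (integral {t..\<sigma>} g_traj *v \<theta>)"
      using increment[OF assms(1)] False by simp
    also have "\<dots> = oint \<sigma> t g_traj *v \<theta>"
      using False by (simp add: oint_def matrix_vector_mult_uminus_left)
    finally show ?thesis .
  qed
qed

definition g_primitive :: "real \<Rightarrow> real^'l^'n" where "g_primitive s = integral {0..s} g_traj"

lemma oint_g_traj_eq:
  assumes "0 \<le> t" "0 \<le> \<sigma>"
  shows "oint \<sigma> t g_traj = g_primitive t - g_primitive \<sigma>"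
proof -
  have combine: "integral {0..b} g_traj + integral {b..c} g_traj = integral {0..c} g_traj"
    if "0 \<le> b" "b \<le> c" for b c
    using Henstock_Kurzweil_Integration.integral_combine[OF that g_traj_integrable] by simp
  show ?thesis
    using combine[of \<sigma> t] combine[of t \<sigma>] assms
    by (cases "\<sigma> \<le> t") (simp_all add: oint_def g_primitive_def algebra_simps)
qed

lemma regressor_continuous:
  assumes "0 \<le> \<mu>"
  shows "continuous_on (cbox (\<mu>, \<mu>) (b, b)) (\<lambda>(t, \<sigma>). oint \<sigma> t g_traj)"
proof -
  have G: "continuous_on {0..b} g_primitive"
    unfolding g_primitive_def by (rule indefinite_integral_continuous_1[OF g_traj_integrable]) simp
  have "continuous_on (cbox (\<mu>, \<mu>) (b, b)) (\<lambda>z. g_primitive (fst z))"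
    by (rule continuous_on_compose2[OF G continuous_on_fst[OF continuous_on_id]])
       (use assms in \<open>auto simp: cbox_Pair_eq\<close>)
  moreover have "continuous_on (cbox (\<mu>, \<mu>) (b, b)) (\<lambda>z. g_primitive (snd z))"
    by (rule continuous_on_compose2[OF G continuous_on_snd[OF continuous_on_id]])
       (use assms in \<open>auto simp: cbox_Pair_eq\<close>)
  ultimately have "continuous_on (cbox (\<mu>, \<mu>) (b, b)) (\<lambda>z. g_primitive (fst z) - g_primitive (snd z))"
    by (rule continuous_on_diff)
  then show ?thesis
  proof (rule continuous_on_eq)
    show "g_primitive (fst z) - g_primitive (snd z) = (\<lambda>(t, \<sigma>). oint \<sigma> t g_traj) z"
      if "z \<in> cbox (\<mu>, \<mu>) (b, b)" for z
      using that assms oint_g_traj_eq[of "fst z" "snd z"] by (auto simp: cbox_Pair_eq split_beta)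
  qed
qed

lemma window_start_mem: "window_start i \<in> {\<tau> j | j. j \<le> i \<and> \<tau> j \<ge> \<tau> (Suc i) - real Nt * T}"
  and window_start_le: "j \<le> i \<Longrightarrow> \<tau> j \<ge> \<tau> (Suc i) - real Nt * T \<Longrightarrow> window_start i \<le> \<tau> j"
proof -
  have fin: "finite {\<tau> j | j. j \<le> i \<and> \<tau> j \<ge> \<tau> (Suc i) - real Nt * T}"
    by (rule finite_subset[of _ "\<tau> ` {..i}"]) auto
  have "T \<le> real Nt * T" using Nt_pos T_pos by simp
  then have "\<tau> i \<ge> \<tau> (Suc i) - real Nt * T" using event_time_Suc_le[of i] by simp
  then show "window_start i \<in> {\<tau> j | j. j \<le> i \<and> \<tau> j \<ge> \<tau> (Suc i) - real Nt * T}"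
    unfolding window_start_def using fin by (intro Min_in) auto
  show "window_start i \<le> \<tau> j" if "j \<le> i" "\<tau> j \<ge> \<tau> (Suc i) - real Nt * T"
    unfolding window_start_def using that by (intro Min_le[OF fin]) auto
qed

lemma window_start_nonneg: "0 \<le> window_start i"
  using window_start_mem[of i] event_time_nonneg by auto

lemma window_start_eq_0: "\<tau> (Suc i) < real Nt * T \<Longrightarrow> window_start i = 0"
  using window_start_le[of 0 i] window_start_nonneg[of i] event_time_0 by simp

lemma moment_eq_gram_theta: "moment i = gram i *v \<theta>"
proof -
  define b where "b = \<tau> (Suc i)"
  have dom: "{window_start i..b} \<times> {window_start i..b} = cbox (window_start i, window_start i) (b, b)"
    by (simp add: cbox_Pair_eq)
  have "moment i = integral (cbox (window_start i, window_start i) (b, b))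
      ((\<lambda>A. A *v \<theta>) \<circ> (\<lambda>(t, \<sigma>). transpose (oint \<sigma> t g_traj) ** oint \<sigma> t g_traj))"
    unfolding moment_def b_def[symmetric] dom using window_start_nonneg[of i]
    by (intro integral_cong) (auto simp: cbox_Pair_eq prediction_error_eq matrix_vector_mul_assoc
        simp del: transpose_matrix_vector)
  also have "\<dots> = gram i *v \<theta>"
    unfolding gram_def b_def[symmetric] dom
    using continuous_on_gram[OF regressor_continuous[OF window_start_nonneg]]
    by (intro integral_linear[OF _ bounded_linear_matrix_vector_mult] integrable_continuous) (simp add: split_beta)
  finally show ?thesis .
qed

lemma estimate_step_le: "norm (\<theta>h (\<tau> (Suc i)) - \<theta>h (\<tau> i)) \<le> norm (\<theta> - \<theta>h (\<tau> i))"
proof -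
  have "\<not> (norm (\<theta> - \<theta>h (\<tau> i)))\<^sup>2 < (norm (\<theta>h (\<tau> (Suc i)) - \<theta>h (\<tau> i)))\<^sup>2"
    using parameter_update[of i] moment_eq_gram_theta[of i] unfolding is_arg_min_def by blast
  then show ?thesis by (simp add: not_less power2_le_iff_abs_le)
qed

lemma estimate_error_le: "norm (\<theta>h (\<tau> i) - \<theta>) \<le> 2 ^ i * norm (\<theta>h0 - \<theta>)"
proof (induction i)
  case (Suc i)
  have "norm (\<theta>h (\<tau> (Suc i)) - \<theta>) \<le> norm (\<theta>h (\<tau> (Suc i)) - \<theta>h (\<tau> i)) + norm (\<theta>h (\<tau> i) - \<theta>)"
    using norm_triangle_ineq[of "\<theta>h (\<tau> (Suc i)) - \<theta>h (\<tau> i)" "\<theta>h (\<tau> i) - \<theta>"] by simp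
  also have "\<dots> \<le> 2 * norm (\<theta>h (\<tau> i) - \<theta>)" using estimate_step_le[of i] by (simp add: norm_minus_commute)
  finally show ?case using Suc by simp
qed (simp add: event_time_0 theta_hat_at_0)

lemma theta_hat_stays: "\<theta>h (\<tau> i) = \<theta> \<Longrightarrow> i \<le> j \<Longrightarrow> \<theta>h (\<tau> j) = \<theta>"
proof (induction j)
  case (Suc j)
  then show ?case using estimate_step_le[of j] by (cases "i = Suc j") auto
qed simp

lemma x_right_derivative:
  assumes "t \<in> {\<tau> i..<\<tau> (Suc i)}"
  shows "(x has_vector_derivative closed_loop (\<theta>h (\<tau> i)) (x t)) (at t within {t..})"
proof -
  have "at t within {t..<\<tau> (Suc i)} = at t within {t..}"
    by (rule at_within_nhd[where S="{..<\<tau> (Suc i)}"]) (use assms in auto)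
  then show ?thesis
    using has_vector_derivative_within_subset[OF x_derivative_between_events[OF assms], of "{t..<\<tau> (Suc i)}"] assms
    by auto
qed

lemma x_derivative_inside_event_interval:
  assumes "t \<in> {\<tau> i<..<\<tau> (Suc i)}"
  shows "(x has_vector_derivative closed_loop (\<theta>h (\<tau> i)) (x t)) (at t)"
proof -
  have "at t within {\<tau> i..<\<tau> (Suc i)} = at t"
    by (rule at_within_open_subset[where S="{\<tau> i<..<\<tau> (Suc i)}"]) (use assms in auto)
  then show ?thesis using x_derivative_between_events[of t i] assms by auto
qed

text \<open>While the whole window starts at 0, the update equation forces the Gram matrix, and hence
  the regressor along every earlier interval, to annihilate the new estimation error.\<close>
lemma regressor_annihilates_estimate_error:
  assumes early: "\<tau> (Suc i) < real Nt * T" and ji: "j \<le> i" and t: "t \<in> {\<tau> j..\<tau> (Suc j)}"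
  shows "g (x t) (k (\<theta>h (\<tau> j)) (x t)) *v (\<theta>h (\<tau> (Suc i)) - \<theta>) = 0"
proof -
  define b d where "b = \<tau> (Suc i)" and "d = \<theta>h (\<tau> (Suc i)) - \<theta>"
  define q where "q = (\<lambda>(t, \<sigma>). oint \<sigma> t g_traj)"
  have "gram i *v d = 0"
    using parameter_update[of i] moment_eq_gram_theta[of i]
    unfolding is_arg_min_def d_def by (simp add: matrix_vector_mult_diff_distrib)
  then have gram_0: "integral (cbox (0, 0) (b, b)) (\<lambda>z. transpose (q z) ** q z) *v d = 0"
    unfolding gram_def window_start_eq_0[OF early] b_def[symmetric] q_def
    by (simp add: cbox_Pair_eq case_prod_unfold)
  have "0 < b" unfolding b_def using event_time_nonneg[of i] event_times_increasing[of i] by linarith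
  then have "Henstock_Kurzweil_Integration.content (cbox (0::real, 0::real) (b, b)) > 0"
    by (simp add: content_Pair)
  then have box: "box (0, 0) (b, b) \<noteq> {}" using content_pos_lt_eq box_ne_empty(2) by metis
  have jb: "\<tau> (Suc j) \<le> b" unfolding b_def using ji event_time_le_iff by simp
  define G where "G s = g (x s) (k (\<theta>h (\<tau> j)) (x s)) *v d" for s
  have "integral {\<tau> j..s} G = 0" if s: "s \<in> {\<tau> j..\<tau> (Suc j)}" for s
  proof -
    have "(s, \<tau> j) \<in> cbox (0, 0) (b, b)" using s jb event_time_nonneg[of j] by (auto simp: cbox_Pair_eq)
    from gram_integral_annihilates_imp_annihilates[OF _ box gram_0 this]
    have "integral {\<tau> j..s} g_traj *v d = 0"
      using regressor_continuous[of 0 b] s unfolding q_def by (simp add: oint_def)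
    moreover have "integral {\<tau> j..s} (\<lambda>r. g_traj r *v d) = integral {\<tau> j..s} g_traj *v d"
      using integral_linear[OF g_traj_integrable[OF event_time_nonneg] bounded_linear_matrix_vector_mult]
      by (simp add: o_def)
    moreover have "integral {\<tau> j..s} G = integral {\<tau> j..s} (\<lambda>r. g_traj r *v d)"
    proof (rule integral_spike[where S="{\<tau> (Suc j)}"])
      show "g_traj r *v d = G r" if "r \<in> {\<tau> j..s} - {\<tau> (Suc j)}" for r
        using that s theta_hat_between_events[of r j] by (auto simp: G_def g_traj_def)
    qed auto
    ultimately show ?thesis by simp
  qed
  moreover have "continuous_on {\<tau> j..\<tau> (Suc j)} G"
    unfolding G_def
    by (intro continuous_on_compose2[OF linear_continuous_on[OF bounded_linear_matrix_vector_mult]]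
        continuous_on_compose2[OF continuous_on_feedback[OF g_cont] x_continuous_on[OF event_time_nonneg]]) auto
  ultimately have "G t = 0"
    using indefinite_integral_zero_imp_zero[OF _ event_times_increasing _ t] by blast
  then show ?thesis unfolding G_def d_def .
qed

lemma x_stays_zero:
  assumes "x (\<tau> i) = 0" "\<tau> i \<le> s"
  shows "x s = 0"
proof -
  have step: "\<forall>s\<in>{\<tau> j..\<tau> (Suc j)}. x s = 0" if "x (\<tau> j) = 0" for j
  proof (rule solution_stays_zero[OF x_continuous_on[OF event_time_nonneg] x_derivative_between_events _ that])
    show "\<exists>L>0. \<exists>\<rho>>0. \<forall>y. norm y \<le> \<rho> \<longrightarrow> norm (closed_loop (\<theta>h (\<tau> j)) y) \<le> L * norm y"
      unfolding closed_loop_def by (rule linear_bound)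
  qed (use event_times_increasing less_imp_le in auto)
  have "\<forall>s\<in>{\<tau> i..\<tau> (i + n)}. x s = 0" for n
  proof (induction n)
    case (Suc n)
    then have "x (\<tau> (i + n)) = 0" using event_time_le_iff[of i "i + n"] by simp
    then have "\<forall>s\<in>{\<tau> (i + n)..\<tau> (i + Suc n)}. x s = 0" using step[of "i + n"] by simp
    then show ?case using Suc.IH by (auto simp del: add_Suc_right)
  qed (use assms in simp)
  note up_to_event = this
  obtain J where J: "s < \<tau> J" using event_times_unbounded by blast
  then have "i \<le> J" using assms(2) event_time_le_iff[of i J] by linarith
  then have "\<forall>s\<in>{\<tau> i..\<tau> J}. x s = 0" using up_to_event[of "J - i"] by simp
  then show ?thesis using J assms(2) by simp
qed

lemma V_le_trigger_level:
  assumes x_ne: "x (\<tau> i) \<noteq> 0"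
    and VQ: "V (\<theta>h (\<tau> i)) (x (\<tau> i)) \<le> Q (\<theta>h (\<tau> i)) (x (\<tau> i))"
    and a_pos: "a (x (\<tau> i)) > 0"
    and V_cont: "continuous_on UNIV (V (\<theta>h (\<tau> i)))"
    and t: "t \<in> {\<tau> i..\<tau> (Suc i)}"
  shows "V (\<theta>h (\<tau> i)) (x t) \<le> Q (\<theta>h (\<tau> i)) (x (\<tau> i)) + a (x (\<tau> i))"
proof (rule ccontr)
  define c where "c = Q (\<theta>h (\<tau> i)) (x (\<tau> i)) + a (x (\<tau> i))"
  assume "\<not> V (\<theta>h (\<tau> i)) (x t) \<le> Q (\<theta>h (\<tau> i)) (x (\<tau> i)) + a (x (\<tau> i))"
  then have above: "c < V (\<theta>h (\<tau> i)) (x t)" unfolding c_def by simp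
  have below: "V (\<theta>h (\<tau> i)) (x (\<tau> i)) < c" unfolding c_def using VQ a_pos by simp
  have "continuous_on {\<tau> i..t} (\<lambda>s. V (\<theta>h (\<tau> i)) (x s))"
    by (rule continuous_on_compose2[OF V_cont x_continuous_on[OF event_time_nonneg]]) simp
  then obtain s where s: "\<tau> i \<le> s" "s \<le> t" "V (\<theta>h (\<tau> i)) (x s) = c"
    using IVT'[of "\<lambda>s. V (\<theta>h (\<tau> i)) (x s)" "\<tau> i" c t, OF less_imp_le[OF below] less_imp_le[OF above]] t
    by auto
  moreover have "\<tau> i \<noteq> s" using below s(3) by auto
  ultimately have "\<tau> i < s" by simp
  with s have "Inf (ereal ` {t. t > \<tau> i \<and> V (\<theta>h (\<tau> i)) (x t) = c}) \<le> ereal s"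
    by (intro Inf_lower) auto
  then have "ereal (\<tau> (Suc i)) \<le> ereal s"
    unfolding next_event_time c_def[symmetric] using x_ne by (simp add: min.coboundedI2)
  then have "s = t" using s t by auto
  then show False using s above by simp
qed

lemma ode_sol_after_identification:
  assumes identified: "\<theta>h (\<tau> j) = \<theta>"
  shows "ode_sol (\<lambda>y. f y (k \<theta> y) + g y (k \<theta> y) *v \<theta>) (\<lambda>t. x (\<tau> j + t))"
proof -
  define t0 where "t0 = \<tau> j"
  have t0: "0 \<le> t0" unfolding t0_def by (rule event_time_nonneg)
  have field: "f_traj s + g_traj s *v \<theta> = closed_loop \<theta> (x s)" if "t0 \<le> s" for s
  proof -
    have "0 \<le> s" using that t0 by simp
    then obtain i where i: "\<tau> i \<le> s" "s < \<tau> (Suc i)" by (rule event_interval_exists)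
    then have "j \<le> i" using that event_time_less_iff[of j "Suc i"] unfolding t0_def by simp
    then show ?thesis
      using theta_hat_stays[OF identified] theta_hat_between_events[of s i] i
      by (simp add: closed_loop_def f_traj_def g_traj_def)
  qed
  text \<open>Across event times the derivative is recovered from the integral representation.\<close>
  have deriv: "(x has_vector_derivative closed_loop \<theta> (x t)) (at t within {t0..})" if t: "t0 \<le> t" for t
  proof -
    have t_in: "t \<in> {t0..t+1}" using t by simp
    have "x u = x t0 + integral {t0..u} (\<lambda>s. closed_loop \<theta> (x s))" if "u \<in> {t0..t+1}" for u
    proof -
      have "integral {t0..u} (\<lambda>s. f_traj s + g_traj s *v \<theta>) = x u - x t0"
        using x_increment_eq_integral[of t0 u] that t0 by (simp add: integral_unique)
      moreover have "integral {t0..u} (\<lambda>s. f_traj s + g_traj s *v \<theta>) = integral {t0..u} (\<lambda>s. closed_loop \<theta> (x s))"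
        by (rule integral_cong) (use field in auto)
      ultimately show ?thesis by simp
    qed
    moreover have "continuous_on {t0..t+1} (\<lambda>s. closed_loop \<theta> (x s))"
      using continuous_on_compose2[OF closed_loop_continuous[of UNIV \<theta>] x_continuous_on[OF t0]] by simp
    then have "((\<lambda>u. x t0 + integral {t0..u} (\<lambda>s. closed_loop \<theta> (x s))) has_vector_derivative
        closed_loop \<theta> (x t)) (at t within {t0..t+1})"
      using has_vector_derivative_add[OF has_vector_derivative_const[of "x t0"]
          integral_has_vector_derivative[OF _ t_in]] by simp
    ultimately have "(x has_vector_derivative closed_loop \<theta> (x t)) (at t within {t0..t+1})"
      by (rule has_vector_derivative_transform[OF t_in])
    moreover have "at t within {t0..t+1} = at t within {t0..}"
      by (rule at_within_nhd[where S="{..<t+1}"]) auto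
    ultimately show ?thesis by simp
  qed
  then show ?thesis
    unfolding t0_def closed_loop_def by (rule ode_sol_shift)
qed

text \<open>The trigger caps V at Q + a at the last event; with quadratic bounds on V, Q and a this
  turns into a linear bound on the growth of |x| between two events.\<close>
lemma norm_growth_between_events:
  assumes a_pd: "pos_def a" and V_cont: "continuous_on UNIV (V (\<theta>h (\<tau> n)))"
    and K: "0 < K1" "K1 \<le> K2" and Ca: "0 \<le> Ca"
    and quadratic: "\<And>y. norm y \<le> Rb \<Longrightarrow> K1 * (norm y)\<^sup>2 \<le> V (\<theta>h (\<tau> n)) y \<and>
        V (\<theta>h (\<tau> n)) y \<le> Q (\<theta>h (\<tau> n)) y \<and> Q (\<theta>h (\<tau> n)) y \<le> K2 * (norm y)\<^sup>2"
    and a_le: "a (x (\<tau> n)) \<le> Ca * (norm (x (\<tau> n)))\<^sup>2"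
    and c: "c = sqrt ((K2 + Ca) / K1)"
    and small: "2 * c * norm (x (\<tau> n)) \<le> Rb"
    and t: "t \<in> {\<tau> n..\<tau> (Suc n)}"
  shows "norm (x t) \<le> c * norm (x (\<tau> n))"
proof (cases "x (\<tau> n) = 0")
  case True
  then show ?thesis using x_stays_zero[OF True] t by simp
next
  case False
  define \<phi> where "\<phi> = \<theta>h (\<tau> n)"
  define Cb where "Cb = K1 * (c * norm (x (\<tau> n)))\<^sup>2"
  have c1: "1 \<le> c" and c_sq: "c\<^sup>2 * K1 = K2 + Ca" unfolding c using K Ca by auto
  have lower: "K1 * (norm y)\<^sup>2 \<le> V \<phi> y" if "norm y \<le> Rb" for y
    using quadratic[OF that] unfolding \<phi>_def by blast
  have pos: "0 < c * norm (x (\<tau> n))" using c1 False by simp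
  have "norm (x (\<tau> n)) \<le> c * norm (x (\<tau> n))" using mult_right_mono[OF c1 norm_ge_zero] by simp
  also have "\<dots> < Rb" using small pos by linarith
  finally have x_lt: "norm (x (\<tau> n)) < Rb" .
  then have x_quad: "V \<phi> (x (\<tau> n)) \<le> Q \<phi> (x (\<tau> n))" "Q \<phi> (x (\<tau> n)) \<le> K2 * (norm (x (\<tau> n)))\<^sup>2"
    using quadratic[of "x (\<tau> n)"] unfolding \<phi>_def by auto
  have a_pos: "a (x (\<tau> n)) > 0" using a_pd False unfolding pos_def_def by blast
  have V_bound: "V \<phi> (x s) \<le> Cb" if s: "s \<in> {\<tau> n..\<tau> (Suc n)}" for s
  proof -
    have "V \<phi> (x s) \<le> Q \<phi> (x (\<tau> n)) + a (x (\<tau> n))"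
      using V_le_trigger_level[OF False x_quad(1)[unfolded \<phi>_def] a_pos V_cont s] unfolding \<phi>_def .
    also have "\<dots> \<le> K2 * (norm (x (\<tau> n)))\<^sup>2 + Ca * (norm (x (\<tau> n)))\<^sup>2"
      using x_quad(2) a_le by (rule add_mono)
    also have "\<dots> = (c\<^sup>2 * K1) * (norm (x (\<tau> n)))\<^sup>2" unfolding c_sq by (simp add: algebra_simps)
    also have "\<dots> = Cb" unfolding Cb_def by (simp add: power_mult_distrib)
    finally show ?thesis .
  qed
  have "(c * norm (x (\<tau> n)))\<^sup>2 < Rb\<^sup>2"
    by (rule power_strict_mono) (use small pos in auto)
  then have "Cb < K1 * Rb\<^sup>2" unfolding Cb_def using K by simp
  moreover have "V \<phi> (x s) \<le> Cb" if "s \<in> {\<tau> n..t}" for s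
    using V_bound that t by auto
  moreover have "\<tau> n \<le> t" using t by simp
  ultimately have "norm (x t) < Rb"
    using norm_stays_below_if_energy_bounded[where x=x and a="\<tau> n" and t=t and W="V \<phi>" and C=Cb]
      x_continuous_on[OF event_time_nonneg, of n t] lower x_lt by blast
  then have "K1 * (norm (x t))\<^sup>2 \<le> K1 * (c * norm (x (\<tau> n)))\<^sup>2"
    using lower[of "x t"] V_bound[OF t] unfolding Cb_def by linarith
  then have "(norm (x t))\<^sup>2 \<le> (c * norm (x (\<tau> n)))\<^sup>2" by (rule mult_left_le_imp_le[OF _ K(1)])
  then show ?thesis by (rule power2_le_imp_le[OF _ less_imp_le[OF pos]])
qed

end

section \<open>Exponential stability\<close>

locale adaptive_control =
  fixes f :: "real^'n \<Rightarrow> real^'m \<Rightarrow> real^'n" and g :: "real^'n \<Rightarrow> real^'m \<Rightarrow> real^'l^'n"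
    and k :: "real^'l \<Rightarrow> real^'n \<Rightarrow> real^'m" and V Q :: "real^'l \<Rightarrow> real^'n \<Rightarrow> real"
    and M \<omega> R :: "real^'l \<Rightarrow> real" and a :: "real^'n \<Rightarrow> real" and T :: real and N Nt :: nat
  assumes f_cont: "continuous_on UNIV (\<lambda>(x, u). f x u)"
    and g_cont: "continuous_on UNIV (\<lambda>(x, u). g x u)"
    and k_cont: "continuous_on UNIV (\<lambda>(\<phi>, x). k \<phi> x)"
    and linear_bound: "\<And>\<phi> \<theta>. \<exists>L>0. \<exists>\<rho>>0. \<forall>y. norm y \<le> \<rho> \<longrightarrow> norm (f y (k \<phi> y) + g y (k \<phi> y) *v \<theta>) \<le> L * norm y"
    and V_cont: "\<And>\<phi>. continuous_on UNIV (V \<phi>)"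
    and identifiability: "\<And>(\<tau> :: nat \<Rightarrow> real) (\<theta> :: real^'l) (d :: nat \<Rightarrow> real^'l) (x :: real \<Rightarrow> real^'n).
               \<tau> 0 = 0 \<Longrightarrow> (\<forall>i<N. \<tau> i < \<tau> (Suc i)) \<Longrightarrow> (\<forall>i\<le>N. d i \<noteq> 0) \<Longrightarrow>
               continuous_on {0..\<tau> N} x \<Longrightarrow>
               (\<forall>i<N. \<forall>t\<in>{\<tau> i..<\<tau> (Suc i)}.
                  (x has_vector_derivative
                     (f (x t) (k (\<theta> + d i) (x t)) + g (x t) (k (\<theta> + d i) (x t)) *v \<theta>))
                     (at t within {t..})) \<Longrightarrow>
               (\<forall>i<N. \<forall>t\<in>{\<tau> i<..<\<tau> (Suc i)}.
                  (x has_vector_derivative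
                     (f (x t) (k (\<theta> + d i) (x t)) + g (x t) (k (\<theta> + d i) (x t)) *v \<theta>))
                     (at t)) \<Longrightarrow>
               (\<forall>i<N. \<forall>j\<le>i. \<forall>t\<in>{\<tau> j..\<tau> (Suc j)}.
                  g (x t) (k (\<theta> + d j) (x t)) *v d (Suc i) = 0) \<Longrightarrow>
               \<forall>t\<in>{0..\<tau> N}. x t = 0"
    and exp_stab: "\<And>\<phi>. M \<phi> > 0 \<and> \<omega> \<phi> > 0 \<and> R \<phi> > 0"
    and exp_stab_bound: "\<And>\<phi> x t. ode_sol (\<lambda>x. f x (k \<phi> x) + g x (k \<phi> x) *v \<phi>) x \<Longrightarrow>
               norm (x 0) \<le> R \<phi> \<Longrightarrow> t \<ge> 0 \<Longrightarrow>
               norm (x t) \<le> M \<phi> * exp (- \<omega> \<phi> * t) * norm (x 0)"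
    and quad: "\<And>\<Theta>. compact \<Theta> \<Longrightarrow> \<Theta> \<noteq> {} \<Longrightarrow>
               \<exists>Rb>0. \<exists>K1 K2. 0 < K1 \<and> K1 < K2 \<and>
                 (\<forall>\<phi>\<in>\<Theta>. \<forall>x. norm x \<le> Rb \<longrightarrow>
                    K1 * (norm x)\<^sup>2 \<le> V \<phi> x \<and> V \<phi> x \<le> Q \<phi> x \<and> Q \<phi> x \<le> K2 * (norm x)\<^sup>2)"
    and T_pos: "T > 0" and a_pd: "pos_def a"
    and a_quad: "\<exists>\<delta>>0. \<exists>C. \<forall>x. x \<noteq> 0 \<and> norm x \<le> \<delta> \<longrightarrow> a x / (norm x)\<^sup>2 \<le> C"
    and Nt_gt: "Nt > N"
begin

lemma hybrid_trajectoryI: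
  "hybrid_sol f g k V Q a T Nt \<theta> x0 \<theta>h0 x \<theta>h \<tau> \<Longrightarrow> hybrid_trajectory f g k V Q a T Nt \<theta> x0 \<theta>h0 x \<theta>h \<tau>"
  by unfold_locales (use f_cont g_cont k_cont T_pos Nt_gt linear_bound in auto)

lemma identified_within_N_events:
  assumes sol: "hybrid_sol f g k V Q a T Nt \<theta> x0 \<theta>h0 x \<theta>h \<tau>" and x0: "x0 \<noteq> 0"
  shows "\<exists>j\<le>N. \<theta>h (\<tau> j) = \<theta>"
proof (rule ccontr)
  interpret hybrid_trajectory f g k V Q a T Nt \<theta> x0 \<theta>h0 x \<theta>h \<tau> by (rule hybrid_trajectoryI[OF sol])
  assume "\<not> (\<exists>j\<le>N. \<theta>h (\<tau> j) = \<theta>)"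
  then have "\<forall>i\<le>N. \<theta>h (\<tau> i) - \<theta> \<noteq> 0" by auto
  moreover have "\<forall>i<N. \<tau> i < \<tau> (Suc i)" using event_times_increasing by blast
  moreover have "continuous_on {0..\<tau> N} x" by (rule x_continuous_on) simp
  moreover have "\<forall>i<N. \<forall>t\<in>{\<tau> i..<\<tau> (Suc i)}. (x has_vector_derivative
      f (x t) (k (\<theta>h (\<tau> i)) (x t)) + g (x t) (k (\<theta>h (\<tau> i)) (x t)) *v \<theta>) (at t within {t..})"
    using x_right_derivative by (simp add: closed_loop_def)
  moreover have "\<forall>i<N. \<forall>t\<in>{\<tau> i<..<\<tau> (Suc i)}. (x has_vector_derivative
      f (x t) (k (\<theta>h (\<tau> i)) (x t)) + g (x t) (k (\<theta>h (\<tau> i)) (x t)) *v \<theta>) (at t)"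
    using x_derivative_inside_event_interval by (simp add: closed_loop_def)
  moreover have "\<forall>i<N. \<forall>j\<le>i. \<forall>t\<in>{\<tau> j..\<tau> (Suc j)}. g (x t) (k (\<theta>h (\<tau> j)) (x t)) *v (\<theta>h (\<tau> (Suc i)) - \<theta>) = 0"
  proof (intro allI impI ballI)
    fix i j t assume "i < N" "j \<le> i" "t \<in> {\<tau> j..\<tau> (Suc j)}"
    have "\<tau> (Suc i) \<le> real (Suc i) * T" by (rule event_time_le)
    also have "\<dots> < real Nt * T" using \<open>i < N\<close> Nt_gt T_pos by simp
    finally show "g (x t) (k (\<theta>h (\<tau> j)) (x t)) *v (\<theta>h (\<tau> (Suc i)) - \<theta>) = 0"
      by (rule regressor_annihilates_estimate_error[OF _ \<open>j \<le> i\<close> \<open>t \<in> {\<tau> j..\<tau> (Suc j)}\<close>])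
  qed
  ultimately have "\<forall>t\<in>{0..\<tau> N}. x t = 0"
    using identifiability[of \<tau> "\<lambda>i. \<theta>h (\<tau> i) - \<theta>" x \<theta>, unfolded add.commute[of \<theta>] diff_add_cancel]
      event_time_0 by blast
  then show False using x0 x_at_0 event_time_nonneg[of N] by auto
qed

lemma norm_before_event_le:
  assumes sol: "hybrid_sol f g k V Q a T Nt \<theta> x0 \<theta>h0 x \<theta>h \<tau>"
    and K: "0 < K1" "K1 \<le> K2" and Ca: "0 \<le> Ca" and c: "c = sqrt ((K2 + Ca) / K1)"
    and quadratic: "\<forall>\<phi>\<in>cball \<theta> (2 ^ N * norm (\<theta>h0 - \<theta>)). \<forall>y. norm y \<le> Rb \<longrightarrow>
        K1 * (norm y)\<^sup>2 \<le> V \<phi> y \<and> V \<phi> y \<le> Q \<phi> y \<and> Q \<phi> y \<le> K2 * (norm y)\<^sup>2"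
    and a_le: "\<And>y. norm y \<le> \<delta> \<Longrightarrow> a y \<le> Ca * (norm y)\<^sup>2"
    and small: "c ^ N * norm x0 \<le> min \<delta> (Rb / (2 * c))"
    and "n \<le> N" "t \<in> {0..\<tau> n}"
  shows "norm (x t) \<le> c ^ n * norm x0"
proof -
  interpret hybrid_trajectory f g k V Q a T Nt \<theta> x0 \<theta>h0 x \<theta>h \<tau> by (rule hybrid_trajectoryI[OF sol])
  have c1: "1 \<le> c" unfolding c using K Ca by simp
  show ?thesis using \<open>n \<le> N\<close> \<open>t \<in> {0..\<tau> n}\<close>
  proof (induction n arbitrary: t)
    case 0
    then show ?case using event_time_0 x_at_0 by simp
  next
    case (Suc n)
    show ?case
    proof (cases "t \<le> \<tau> n")
      case True
      then have "norm (x t) \<le> c ^ n * norm x0" using Suc by simp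
      also have "\<dots> \<le> c ^ Suc n * norm x0" using c1 by (intro mult_right_mono) auto
      finally show ?thesis .
    next
      case False
      then have t: "t \<in> {\<tau> n..\<tau> (Suc n)}" using Suc.prems by simp
      have x_n: "norm (x (\<tau> n)) \<le> c ^ n * norm x0" using Suc event_time_nonneg by simp
      also have "\<dots> \<le> c ^ N * norm x0" using c1 Suc.prems by (intro mult_right_mono power_increasing) auto
      finally have x_small: "norm (x (\<tau> n)) \<le> min \<delta> (Rb / (2 * c))" using small by linarith
      have "norm (\<theta>h (\<tau> n) - \<theta>) \<le> 2 ^ N * norm (\<theta>h0 - \<theta>)"
        using estimate_error_le[of n] power_increasing[of n N "2::real"] Suc.prems
        by (meson Suc_leD mult_right_mono norm_ge_zero one_le_numeral order_trans)
      then have "\<theta>h (\<tau> n) \<in> cball \<theta> (2 ^ N * norm (\<theta>h0 - \<theta>))" by (simp add: dist_norm norm_minus_commute)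
      then have "norm (x t) \<le> c * norm (x (\<tau> n))"
        using x_small c1 quadratic
        by (intro norm_growth_between_events[OF a_pd V_cont K Ca _ a_le c _ t]) (auto simp: field_simps)
      also have "\<dots> \<le> c * (c ^ n * norm x0)" using x_n c1 by simp
      finally show ?thesis by simp
    qed
  qed
qed

lemma norm_after_identification_le:
  assumes sol: "hybrid_sol f g k V Q a T Nt \<theta> x0 \<theta>h0 x \<theta>h \<tau>"
    and identified: "\<theta>h (\<tau> j) = \<theta>" and small: "norm (x (\<tau> j)) \<le> R \<theta>" and t: "\<tau> j \<le> t"
  shows "norm (x t) \<le> M \<theta> * exp (\<omega> \<theta> * \<tau> j) * exp (- \<omega> \<theta> * t) * norm (x (\<tau> j))"
proof -
  interpret hybrid_trajectory f g k V Q a T Nt \<theta> x0 \<theta>h0 x \<theta>h \<tau> by (rule hybrid_trajectoryI[OF sol])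
  have "norm (x (\<tau> j + (t - \<tau> j))) \<le> M \<theta> * exp (- \<omega> \<theta> * (t - \<tau> j)) * norm (x (\<tau> j + 0))"
    using exp_stab_bound[OF ode_sol_after_identification[OF identified], of "t - \<tau> j"] small t by simp
  then show ?thesis by (simp add: mult_exp_exp algebra_simps)
qed

text \<open>Before identification (at most N events, hence before time N T) the state grows at most by the
  factor c^N; afterwards it decays like the closed loop with the true parameter.\<close>
lemma exponential_bound_if_small:
  assumes sol: "hybrid_sol f g k V Q a T Nt \<theta> x0 \<theta>h0 x \<theta>h \<tau>"
    and K: "0 < K1" "K1 \<le> K2" and Ca: "0 \<le> Ca" and c: "c = sqrt ((K2 + Ca) / K1)"
    and quadratic: "\<forall>\<phi>\<in>cball \<theta> (2 ^ N * norm (\<theta>h0 - \<theta>)). \<forall>y. norm y \<le> Rb \<longrightarrow>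
        K1 * (norm y)\<^sup>2 \<le> V \<phi> y \<and> V \<phi> y \<le> Q \<phi> y \<and> Q \<phi> y \<le> K2 * (norm y)\<^sup>2"
    and a_le: "\<And>y. norm y \<le> \<delta> \<Longrightarrow> a y \<le> Ca * (norm y)\<^sup>2"
    and small: "c ^ N * norm x0 \<le> min (min \<delta> (Rb / (2 * c))) (R \<theta>)"
    and t: "0 \<le> t"
  shows "norm (x t) \<le> c ^ N * (M \<theta> + 1) * exp (\<omega> \<theta> * (real N * T)) * exp (- \<omega> \<theta> * t) * norm x0"
proof -
  interpret hybrid_trajectory f g k V Q a T Nt \<theta> x0 \<theta>h0 x \<theta>h \<tau> by (rule hybrid_trajectoryI[OF sol])
  have c1: "1 \<le> c" unfolding c using K Ca by simp
  have M: "0 < M \<theta>" and \<omega>: "0 < \<omega> \<theta>" using exp_stab by auto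
  obtain j where j: "j \<le> N" "\<theta>h (\<tau> j) = \<theta> \<or> x0 = 0"
    by (cases "x0 = 0") (auto dest: identified_within_N_events[OF sol])
  have "c ^ N * norm x0 \<le> min \<delta> (Rb / (2 * c))" using small by simp
  from norm_before_event_le[OF sol K Ca c quadratic a_le this j(1)]
  have before: "norm (x s) \<le> c ^ N * norm x0" if "s \<in> {0..\<tau> j}" for s
    using that mult_right_mono[OF power_increasing[OF j(1) c1] norm_ge_zero, of x0] by force
  have "real j * T \<le> real N * T" using j(1) T_pos by (intro mult_right_mono) auto
  then have "\<tau> j \<le> real N * T" using event_time_le[of j] by linarith
  define E where "E s = exp (\<omega> \<theta> * (real N * T)) * exp (- \<omega> \<theta> * s)" for s
  have E_ge_1: "1 \<le> (M \<theta> + 1) * E s" if "s \<le> real N * T" for s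
  proof -
    have "1 \<le> exp (\<omega> \<theta> * (real N * T - s))" using that \<omega> by simp
    also have "\<dots> = E s" unfolding E_def by (simp add: mult_exp_exp algebra_simps)
    finally show ?thesis using mult_mono[of 1 "M \<theta> + 1" 1 "E s"] M by simp
  qed
  have x0_nonneg: "0 \<le> c ^ N * norm x0" using c1 by simp
  have constant_le: "M \<theta> * exp (\<omega> \<theta> * \<tau> j) \<le> (M \<theta> + 1) * exp (\<omega> \<theta> * (real N * T))"
    using \<open>\<tau> j \<le> real N * T\<close> M \<omega> by (intro mult_mono) auto
  show ?thesis
  proof (cases "t \<le> \<tau> j")
    case True
    have "norm (x t) \<le> c ^ N * norm x0 * 1" using before[of t] True t by simp
    also have "\<dots> \<le> c ^ N * norm x0 * ((M \<theta> + 1) * E t)"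
      using E_ge_1[of t] True \<open>\<tau> j \<le> real N * T\<close> x0_nonneg by (intro mult_left_mono) auto
    finally show ?thesis by (simp add: E_def mult_ac)
  next
    case False
    from j(2) show ?thesis
    proof
      assume "\<theta>h (\<tau> j) = \<theta>"
      moreover have x_j: "norm (x (\<tau> j)) \<le> c ^ N * norm x0" using before[of "\<tau> j"] event_time_nonneg by simp
      ultimately have "norm (x t) \<le> M \<theta> * exp (\<omega> \<theta> * \<tau> j) * exp (- \<omega> \<theta> * t) * norm (x (\<tau> j))"
        using norm_after_identification_le[OF sol] small False by simp
      also have "\<dots> \<le> M \<theta> * exp (\<omega> \<theta> * \<tau> j) * exp (- \<omega> \<theta> * t) * (c ^ N * norm x0)"
        using x_j M by (intro mult_left_mono) auto
      also have "\<dots> \<le> (M \<theta> + 1) * exp (\<omega> \<theta> * (real N * T)) * exp (- \<omega> \<theta> * t) * (c ^ N * norm x0)"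
        using constant_le x0_nonneg by (intro mult_right_mono) auto
      finally show ?thesis by (simp add: mult_ac)
    qed (use x_stays_zero[of 0 t] t x_at_0 event_time_0 in simp)
  qed
qed

lemma exponential_bound_exists:
  "\<exists>m r. 0 < m \<and> 0 < r \<and> (\<forall>x0 x \<theta>h \<tau>. norm x0 \<le> r \<longrightarrow>
     hybrid_sol f g k V Q a T Nt \<theta> x0 \<theta>h0 x \<theta>h \<tau> \<longrightarrow>
     (\<forall>t\<ge>0. norm (x t) \<le> m * exp (- \<omega> \<theta> * t) * norm x0))"
proof -
  have "\<theta> \<in> cball \<theta> (2 ^ N * norm (\<theta>h0 - \<theta>))" by simp
  then obtain Rb K1 K2 where Rb: "0 < Rb" and K: "0 < K1" "K1 < K2"
    and quadratic: "\<forall>\<phi>\<in>cball \<theta> (2 ^ N * norm (\<theta>h0 - \<theta>)). \<forall>y. norm y \<le> Rb \<longrightarrow>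
        K1 * (norm y)\<^sup>2 \<le> V \<phi> y \<and> V \<phi> y \<le> Q \<phi> y \<and> Q \<phi> y \<le> K2 * (norm y)\<^sup>2"
    using quad[OF compact_cball] by blast
  obtain \<delta> C where \<delta>: "0 < \<delta>" and C: "\<forall>y. y \<noteq> 0 \<and> norm y \<le> \<delta> \<longrightarrow> a y / (norm y)\<^sup>2 \<le> C"
    using a_quad by blast
  define Ca where "Ca = max C 0"
  have a_le: "a y \<le> Ca * (norm y)\<^sup>2" if "norm y \<le> \<delta>" for y
  proof (cases "y = 0")
    case False
    then have "a y / (norm y)\<^sup>2 \<le> Ca" using C that unfolding Ca_def by force
    then show ?thesis using False by (simp add: divide_le_eq)
  qed (use a_pd in \<open>simp add: pos_def_def\<close>)
  define c where "c = sqrt ((K2 + Ca) / K1)"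
  have c1: "1 \<le> c" unfolding c_def Ca_def using K by simp
  define r where "r = min (min \<delta> (Rb / (2 * c))) (R \<theta>) / c ^ N"
  define m where "m = c ^ N * (M \<theta> + 1) * exp (\<omega> \<theta> * (real N * T))"
  have "0 < m" unfolding m_def using c1 exp_stab[of \<theta>] by (intro mult_pos_pos) auto
  moreover have "0 < r" unfolding r_def using c1 exp_stab[of \<theta>] \<delta> Rb by auto
  moreover have "norm (x t) \<le> m * exp (- \<omega> \<theta> * t) * norm x0"
    if "norm x0 \<le> r" "hybrid_sol f g k V Q a T Nt \<theta> x0 \<theta>h0 x \<theta>h \<tau>" "0 \<le> t" for x0 x \<theta>h \<tau> t
  proof -
    have "c ^ N * norm x0 \<le> min (min \<delta> (Rb / (2 * c))) (R \<theta>)"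
      using that(1) c1 unfolding r_def by (simp add: field_simps)
    from exponential_bound_if_small[OF that(2) K(1) less_imp_le[OF K(2)] _ c_def quadratic a_le this that(3)]
    show ?thesis unfolding m_def Ca_def by simp
  qed
  ultimately show ?thesis by blast
qed

end

theorem theorem3p2:
  fixes f :: "real^'n \<Rightarrow> real^'m \<Rightarrow> real^'n"
    and g :: "real^'n \<Rightarrow> real^'m \<Rightarrow> real^'l^'n"
    and k :: "real^'l \<Rightarrow> real^'n \<Rightarrow> real^'m"
    and V Q :: "real^'l \<Rightarrow> real^'n \<Rightarrow> real"
    and M \<omega> R :: "real^'l \<Rightarrow> real"
    and a :: "real^'n \<Rightarrow> real"
    and T :: real and N Nt :: nat
  assumes f_smooth: "smooth_fun (\<lambda>(x, u). f x u)"
    and g_smooth: "smooth_fun (\<lambda>(x, u). g x u)"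
    and f0: "f 0 0 = 0" and g0: "g 0 0 = 0"
    and k_smooth: "smooth_fun (\<lambda>(\<phi>, x). k \<phi> x)"
    and k0: "\<And>\<phi>. k \<phi> 0 = 0"
    and V_nonneg: "\<And>\<phi> x. V \<phi> x \<ge> 0" and Q_nonneg: "\<And>\<phi> x. Q \<phi> x \<ge> 0"
    and V_cont: "\<And>\<phi>. continuous_on UNIV (V \<phi>)"
    and Q_cont: "\<And>\<phi>. continuous_on UNIV (Q \<phi>)"
    and V_pd: "\<And>\<phi>. pos_def (V \<phi>)" and Q_pd: "\<And>\<phi>. pos_def (Q \<phi>)"
    and V_ru: "\<And>\<phi>. radially_unbounded (V \<phi>)"
    and Q_ru: "\<And>\<phi>. radially_unbounded (Q \<phi>)"
    and V_joint: "continuous_on UNIV (\<lambda>(\<phi>, x). V \<phi> x)"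
    and Q_joint: "continuous_on UNIV (\<lambda>(\<phi>, x). Q \<phi> x)"
    and H1_gas: "\<And>\<phi>. GAS (\<lambda>x. f x (k \<phi> x) + g x (k \<phi> x) *v \<phi>)"
    and H1_bound: "\<And>\<phi> x t. ode_sol (\<lambda>x. f x (k \<phi> x) + g x (k \<phi> x) *v \<phi>) x \<Longrightarrow> t \<ge> 0
                     \<Longrightarrow> V \<phi> (x t) \<le> Q \<phi> (x 0)"
    and H2: "\<And>\<Theta> Mb. compact \<Theta> \<Longrightarrow> \<Theta> \<noteq> {} \<Longrightarrow> Mb \<ge> 0 \<Longrightarrow>
               \<exists>Rb>0. \<forall>\<phi>\<in>\<Theta>. \<forall>x. V \<phi> x \<le> Mb \<longrightarrow> norm x \<le> Rb"
    and N_pos: "N > 0"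
    and H3: "\<And>(\<tau> :: nat \<Rightarrow> real) (\<theta> :: real^'l) (d :: nat \<Rightarrow> real^'l) (x :: real \<Rightarrow> real^'n).
               \<tau> 0 = 0 \<Longrightarrow> (\<forall>i<N. \<tau> i < \<tau> (Suc i)) \<Longrightarrow> (\<forall>i\<le>N. d i \<noteq> 0) \<Longrightarrow>
               continuous_on {0..\<tau> N} x \<Longrightarrow>
               (\<forall>i<N. \<forall>t\<in>{\<tau> i..<\<tau> (Suc i)}.
                  (x has_vector_derivative
                     (f (x t) (k (\<theta> + d i) (x t)) + g (x t) (k (\<theta> + d i) (x t)) *v \<theta>))
                     (at t within {t..})) \<Longrightarrow>
               (\<forall>i<N. \<forall>t\<in>{\<tau> i<..<\<tau> (Suc i)}.
                  (x has_vector_derivative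
                     (f (x t) (k (\<theta> + d i) (x t)) + g (x t) (k (\<theta> + d i) (x t)) *v \<theta>))
                     (at t)) \<Longrightarrow>
               (\<forall>i<N. \<forall>j\<le>i. \<forall>t\<in>{\<tau> j..\<tau> (Suc j)}.
                  g (x t) (k (\<theta> + d j) (x t)) *v d (Suc i) = 0) \<Longrightarrow>
               \<forall>t\<in>{0..\<tau> N}. x t = 0"
    and exp_stab: "\<And>\<phi>. M \<phi> > 0 \<and> \<omega> \<phi> > 0 \<and> R \<phi> > 0"
    and exp_stab_bound: "\<And>\<phi> x t. ode_sol (\<lambda>x. f x (k \<phi> x) + g x (k \<phi> x) *v \<phi>) x \<Longrightarrow>
               norm (x 0) \<le> R \<phi> \<Longrightarrow> t \<ge> 0 \<Longrightarrow>
               norm (x t) \<le> M \<phi> * exp (- \<omega> \<phi> * t) * norm (x 0)"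
    and quad: "\<And>\<Theta>. compact \<Theta> \<Longrightarrow> \<Theta> \<noteq> {} \<Longrightarrow>
               \<exists>Rb>0. \<exists>K1 K2. 0 < K1 \<and> K1 < K2 \<and>
                 (\<forall>\<phi>\<in>\<Theta>. \<forall>x. norm x \<le> Rb \<longrightarrow>
                    K1 * (norm x)\<^sup>2 \<le> V \<phi> x \<and> V \<phi> x \<le> Q \<phi> x \<and> Q \<phi> x \<le> K2 * (norm x)\<^sup>2)"
    and T_pos: "T > 0"
    and a_cont: "continuous_on UNIV a" and a_nonneg: "\<And>x. a x \<ge> 0" and a_pd: "pos_def a"
    and a_quad: "\<exists>\<delta>>0. \<exists>C. \<forall>x. x \<noteq> 0 \<and> norm x \<le> \<delta> \<longrightarrow> a x / (norm x)\<^sup>2 \<le> C"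
    and Nt_gt: "Nt > N"
  shows "\<exists>Mt Rt :: real^'l \<Rightarrow> real^'l \<Rightarrow> real.
           (\<forall>\<theta> \<theta>h0. Mt \<theta> \<theta>h0 > 0 \<and> Rt \<theta> \<theta>h0 > 0) \<and>
           (\<forall>\<theta> \<theta>h0 x0 x \<theta>h \<tau>. norm x0 \<le> Rt \<theta> \<theta>h0 \<longrightarrow>
              hybrid_sol f g k V Q a T Nt \<theta> x0 \<theta>h0 x \<theta>h \<tau> \<longrightarrow>
              (\<forall>t\<ge>0. norm (x t) \<le> Mt \<theta> \<theta>h0 * exp (- \<omega> \<theta> * t) * norm x0))"
proof -
  interpret adaptive_control f g k V Q M \<omega> R a T N Nt
    by unfold_locales
      (fact smooth_fun_continuous[OF f_smooth] smooth_fun_continuous[OF g_smooth]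
        smooth_fun_continuous[OF k_smooth] closed_loop_field_linear_bound[OF f_smooth g_smooth k_smooth f0 g0 k0]
        V_cont H3 exp_stab exp_stab_bound quad T_pos a_pd a_quad Nt_gt)+
  have "\<forall>\<theta> \<theta>h0. \<exists>m r. 0 < m \<and> 0 < r \<and> (\<forall>x0 x \<theta>h \<tau>. norm x0 \<le> r \<longrightarrow>
      hybrid_sol f g k V Q a T Nt \<theta> x0 \<theta>h0 x \<theta>h \<tau> \<longrightarrow>
      (\<forall>t\<ge>0. norm (x t) \<le> m * exp (- \<omega> \<theta> * t) * norm x0))"
    using exponential_bound_exists by blast
  then show ?thesis by metis
qed

end
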